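(* The class $\mathcal U_{\mathrm{fin}}$ of all finite two-sorted ultrametric spaces, with dc-embeddings as morphisms, is a Fraïssé class: it is nonempty, has only countably many dc-isomorphism types, and has the joint embedding property and the amalgamation property. Its Fraïssé limit $\mathbb U$ is dc-isomorphic to $\mathbb U_{\mathbb Q}$, the countable rational Urysohn ultrametric space viewed as a two-sorted space with distance set $\mathbb Q_{\ge 0}$. In particular, $\mathbb U$ is both dc-homogeneous and iso-homogeneous.
   Context: A two-sorted ultrametric space is a triple $(X,d_X,D_X)$ where $D_X$ is a linearly ordered set with least element $0$ (the distance set), $X$ is a set of points, and $d_X\colon X\times X\to D_X$ satisfies $d_X(x,y)=d_X(y,x)$, $d_X(x,y)=0\iff x=y$, and $d_X(x,z)\le \max\{d_X(x,y),d_X(y,z)\}$. It is finite (resp. countable) if both $X$ and $D_X$ are finite (resp. countable). A dc-embedding $f\colon (X,d_X,D_X)\to (Y,d_Y,D_Y)$ is an injective map $f\colon X\to Y$ together with an order embedding $D_f\colon D_X\to D_Y$ with $D_f(0)=0$ such that $d_Y(f(x),f(x'))=D_f(d_X(x,x'))$ for all $x,x'\in X$. A dc-isomorphism is a dc-embedding that is bijective in both sorts. It is an isometric embedding if $D_X\subseteq D_Y$ and $D_f$ is the inclusion; an isometry is a dc-isomorphism with $D_X=D_Y$ and $D_f$ the identity. $A$ is a substructure of $X$ if $A\subseteq X$, $D_A\subseteq D_X$ and the inclusion is a dc-embedding. Joint embedding property: any two objects dc-embed into a common one. Amalgamation property: for all dc-embeddings $\alpha_1\colon A\to B$, $\alpha_2\colon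 A\to C$ of finite spaces there are a finite $D$ and dc-embeddings $\beta_1\colon B\to D$, $\beta_2\colon C\to D$ with $\beta_1\circ\alpha_1=\beta_2\circ\alpha_2$. The Fraïssé limit of the class is the (unique up to dc-isomorphism) countable two-sorted ultrametric space that is the union of an increasing chain of finite substructures, into which every finite space dc-embeds, and in which every dc-isomorphism between finite substructures extends to a dc-automorphism. A space $X$ is dc-homogeneous if every dc-isomorphism between finite substructures of $X$ extends to a dc-automorphism of $X$; it is iso-homogeneous if every isometry between finite substructures of $X$ extends to an isometry of $X$. $\mathbb U_{\mathbb Q}$ is the unique (up to isometry) countable ultrametric space with all distances in $\mathbb Q_{\ge0}$ into which every finite ultrametric space with rational distances embeds isometrically and in which every isometry between finite subsets extends to an isometry of the whole space. *)

theory Defs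
  imports Complex_Main "HOL-Library.Countable_Set"
begin

record ('a, 'b) tsu =
  tpts   :: "'a set"
  tdists :: "'b set"
  tle    :: "'b \<Rightarrow> 'b \<Rightarrow> bool"
  tzero  :: 'b
  tdist  :: "'a \<Rightarrow> 'a \<Rightarrow> 'b"

definition is_tsu :: "('a, 'b) tsu \<Rightarrow> bool" where
  "is_tsu X \<longleftrightarrow>
     (\<forall>s\<in>tdists X. tle X s s) \<and>
     (\<forall>s\<in>tdists X. \<forall>t\<in>tdists X. tle X s t \<and> tle X t s \<longrightarrow> s = t) \<and>
     (\<forall>s\<in>tdists X. \<forall>t\<in>tdists X. \<forall>u\<in>tdists X. tle X s t \<and> tle X t u \<longrightarrow> tle X s u) \<and>
     (\<forall>s\<in>tdists X. \<forall>t\<in>tdists X. tle X s t \<or> tle X t s) \<and>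
     tzero X \<in> tdists X \<and> (\<forall>t\<in>tdists X. tle X (tzero X) t) \<and>
     (\<forall>x\<in>tpts X. \<forall>y\<in>tpts X. tdist X x y \<in> tdists X) \<and>
     (\<forall>x\<in>tpts X. \<forall>y\<in>tpts X. tdist X x y = tdist X y x) \<and>
     (\<forall>x\<in>tpts X. \<forall>y\<in>tpts X. tdist X x y = tzero X \<longleftrightarrow> x = y) \<and>
     (\<forall>x\<in>tpts X. \<forall>y\<in>tpts X. \<forall>z\<in>tpts X.
        tle X (tdist X x z) (tdist X x y) \<or> tle X (tdist X x z) (tdist X y z))"
  \<comment> \<open>the last clause is d(x,z) <= max(d(x,y),d(y,z)) in a linear order\<close>

definition finite_tsu :: "('a, 'b) tsu \<Rightarrow> bool" where
  "finite_tsu X \<longleftrightarrow> is_tsu X \<and> finite (tpts X) \<and> finite (tdists X)"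

definition countable_tsu :: "('a, 'b) tsu \<Rightarrow> bool" where
  "countable_tsu X \<longleftrightarrow> is_tsu X \<and> countable (tpts X) \<and> countable (tdists X)"

text \<open>dc-embedding (f, g) : X \<rightarrow> Y, with g = D_f.\<close>
definition dc_emb :: "('a, 'b) tsu \<Rightarrow> ('c, 'd) tsu \<Rightarrow> ('a \<Rightarrow> 'c) \<Rightarrow> ('b \<Rightarrow> 'd) \<Rightarrow> bool" where
  "dc_emb X Y f g \<longleftrightarrow>
     inj_on f (tpts X) \<and> f ` tpts X \<subseteq> tpts Y \<and>
     g ` tdists X \<subseteq> tdists Y \<and>
     (\<forall>s\<in>tdists X. \<forall>t\<in>tdists X. tle Y (g s) (g t) \<longleftrightarrow> tle X s t) \<and>
     g (tzero X) = tzero Y \<and>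
     (\<forall>x\<in>tpts X. \<forall>x'\<in>tpts X. tdist Y (f x) (f x') = g (tdist X x x'))"

definition dc_iso :: "('a, 'b) tsu \<Rightarrow> ('c, 'd) tsu \<Rightarrow> ('a \<Rightarrow> 'c) \<Rightarrow> ('b \<Rightarrow> 'd) \<Rightarrow> bool" where
  "dc_iso X Y f g \<longleftrightarrow> dc_emb X Y f g \<and>
     bij_betw f (tpts X) (tpts Y) \<and> bij_betw g (tdists X) (tdists Y)"

definition dc_isomorphic :: "('a, 'b) tsu \<Rightarrow> ('c, 'd) tsu \<Rightarrow> bool" where
  "dc_isomorphic X Y \<longleftrightarrow> (\<exists>f g. dc_iso X Y f g)"

definition isometry :: "('a, 'b) tsu \<Rightarrow> ('c, 'b) tsu \<Rightarrow> ('a \<Rightarrow> 'c) \<Rightarrow> bool" where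
  "isometry X Y f \<longleftrightarrow> tdists X = tdists Y \<and> dc_iso X Y f id"

definition substructure :: "('a, 'b) tsu \<Rightarrow> ('a, 'b) tsu \<Rightarrow> bool" where
  "substructure A X \<longleftrightarrow> is_tsu A \<and> tpts A \<subseteq> tpts X \<and> tdists A \<subseteq> tdists X \<and>
     dc_emb A X id id"

definition dc_homogeneous :: "('a, 'b) tsu \<Rightarrow> bool" where
  "dc_homogeneous X \<longleftrightarrow>
     (\<forall>A B f g. substructure A X \<and> finite_tsu A \<and> substructure B X \<and> finite_tsu B \<and>
        dc_iso A B f g \<longrightarrow>
        (\<exists>F G. dc_iso X X F G \<and> (\<forall>x\<in>tpts A. F x = f x) \<and> (\<forall>t\<in>tdists A. G t = g t)))"

definition iso_homogeneous :: "('a, 'b) tsu \<Rightarrow> bool" where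
  "iso_homogeneous X \<longleftrightarrow>
     (\<forall>A B f. substructure A X \<and> finite_tsu A \<and> substructure B X \<and> finite_tsu B \<and>
        isometry A B f \<longrightarrow>
        (\<exists>F. isometry X X F \<and> (\<forall>x\<in>tpts A. F x = f x)))"

text \<open>Fraisse limit of the class of finite two-sorted ultrametric spaces.
  Universality is quantified over finite spaces carried by nat (every finite
  space is dc-isomorphic to one of these).\<close>
definition fraisse_limit :: "('a, 'b) tsu \<Rightarrow> bool" where
  "fraisse_limit U \<longleftrightarrow> countable_tsu U \<and>
     (\<exists>C :: nat \<Rightarrow> ('a, 'b) tsu.
        (\<forall>n. substructure (C n) U \<and> finite_tsu (C n)) \<and>
        (\<forall>n. substructure (C n) (C (Suc n))) \<and>
        tpts U = (\<Union>n. tpts (C n)) \<and> tdists U = (\<Union>n. tdists (C n))) \<and>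
     (\<forall>A :: (nat, nat) tsu. finite_tsu A \<longrightarrow> (\<exists>f g. dc_emb A U f g)) \<and>
     dc_homogeneous U"

definition rat_ultrametric :: "'a set \<Rightarrow> ('a \<Rightarrow> 'a \<Rightarrow> rat) \<Rightarrow> bool" where
  "rat_ultrametric P d \<longleftrightarrow>
     (\<forall>x\<in>P. \<forall>y\<in>P. 0 \<le> d x y \<and> d x y = d y x \<and> (d x y = 0 \<longleftrightarrow> x = y)) \<and>
     (\<forall>x\<in>P. \<forall>y\<in>P. \<forall>z\<in>P. d x z \<le> max (d x y) (d y z))"

definition rat_isometry_on :: "'a set \<Rightarrow> ('a \<Rightarrow> 'a \<Rightarrow> rat) \<Rightarrow> ('b \<Rightarrow> 'b \<Rightarrow> rat) \<Rightarrow> ('a \<Rightarrow> 'b) \<Rightarrow> bool" where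
  "rat_isometry_on S dS dT h \<longleftrightarrow> inj_on h S \<and> (\<forall>x\<in>S. \<forall>y\<in>S. dT (h x) (h y) = dS x y)"

definition is_UQ :: "'a set \<Rightarrow> ('a \<Rightarrow> 'a \<Rightarrow> rat) \<Rightarrow> bool" where
  "is_UQ P d \<longleftrightarrow> countable P \<and> rat_ultrametric P d \<and>
     (\<forall>(A :: nat set) dA. finite A \<and> rat_ultrametric A dA \<longrightarrow>
        (\<exists>h. h ` A \<subseteq> P \<and> rat_isometry_on A dA d h)) \<and>
     (\<forall>S T h. finite S \<and> finite T \<and> S \<subseteq> P \<and> T \<subseteq> P \<and> bij_betw h S T \<and>
        rat_isometry_on S d d h \<longrightarrow>
        (\<exists>H. bij_betw H P P \<and> rat_isometry_on P d d H \<and> (\<forall>x\<in>S. H x = h x)))"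

definition rat_tsu :: "'a set \<Rightarrow> ('a \<Rightarrow> 'a \<Rightarrow> rat) \<Rightarrow> ('a, rat) tsu" where
  "rat_tsu P d = \<lparr>tpts = P, tdists = {q. 0 \<le> q}, tle = (\<le>), tzero = 0, tdist = d\<rparr>"

end

theory Submission
  imports Defs
begin

(* A two-sorted ultrametric space is governed by the one-point extension property ext_prop:
   its distance order is dense with no largest element, and every ultrametrically consistent
   prescription of distances to finitely many points is realised by a point. A back-and-forth
   argument, run first on the distance sets (Cantor's argument for dense orders with least
   element) and then on the points, shows that two countable spaces with this property are
   dc-isomorphic by a map extending any embedding of a finite substructure; its forth half
   embeds every finite space into such a space over any finite substructure.
   The finitely supported functions from the positive rationals to the naturals, with the
   largest point of disagreement as distance, form a countable rational ultrametric space with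
   the property. Coded on the naturals it is a Fraisse limit of the finite spaces and it is a
   copy of U_Q. Universality and homogeneity give the property back to every Fraisse limit and
   to every copy of U_Q, so all of them are dc-isomorphic; joint embedding and amalgamation
   follow by extending embeddings into the model. *)

definition tless :: "('a, 'b) tsu \<Rightarrow> 'b \<Rightarrow> 'b \<Rightarrow> bool" where
  "tless X s t \<longleftrightarrow> tle X s t \<and> s \<noteq> t"

definition ultra_triangle :: "('a, 'b) tsu \<Rightarrow> 'b \<Rightarrow> 'b \<Rightarrow> 'b \<Rightarrow> bool" where
  "ultra_triangle X a b c \<longleftrightarrow>
     (tle X a b \<or> tle X a c) \<and> (tle X b a \<or> tle X b c) \<and> (tle X c a \<or> tle X c b)"

lemma finite_total_has_greatest:
  assumes refl: "\<And>s. s \<in> D \<Longrightarrow> R s s"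
    and trans: "\<And>s t u. s \<in> D \<Longrightarrow> t \<in> D \<Longrightarrow> u \<in> D \<Longrightarrow> R s t \<Longrightarrow> R t u \<Longrightarrow> R s u"
    and total: "\<And>s t. s \<in> D \<Longrightarrow> t \<in> D \<Longrightarrow> R s t \<or> R t s"
    and L: "finite L" "L \<noteq> {}" "L \<subseteq> D"
  shows "\<exists>m\<in>L. \<forall>t\<in>L. R t m"
  using L
proof (induction L rule: finite_ne_induct)
  case (singleton x)
  then show ?case using refl by auto
next
  case (insert x F)
  then obtain m where m: "m \<in> F" "\<forall>t\<in>F. R t m" by auto
  show ?case
  proof (cases "R x m")
    case True
    then show ?thesis using m by auto
  next
    case False
    then have "R m x" using total[of x m] insert m by auto
    then have "\<forall>t\<in>insert x F. R t x" using m insert refl trans[of _ m x] by blast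
    then show ?thesis by auto
  qed
qed

context
  fixes X :: "('a, 'b) tsu"
  assumes X: "is_tsu X"
begin

lemma tsu_refl: "s \<in> tdists X \<Longrightarrow> tle X s s"
  using X unfolding is_tsu_def by blast

lemma tsu_antisym: "s \<in> tdists X \<Longrightarrow> t \<in> tdists X \<Longrightarrow> tle X s t \<Longrightarrow> tle X t s \<Longrightarrow> s = t"
  using X unfolding is_tsu_def by blast

lemma tsu_trans:
  "s \<in> tdists X \<Longrightarrow> t \<in> tdists X \<Longrightarrow> u \<in> tdists X \<Longrightarrow> tle X s t \<Longrightarrow> tle X t u \<Longrightarrow> tle X s u"
  using X unfolding is_tsu_def by blast

lemma tsu_total: "s \<in> tdists X \<Longrightarrow> t \<in> tdists X \<Longrightarrow> tle X s t \<or> tle X t s"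
  using X unfolding is_tsu_def by blast

lemma tsu_zero_in: "tzero X \<in> tdists X"
  using X unfolding is_tsu_def by blast

lemma tsu_zero_le: "t \<in> tdists X \<Longrightarrow> tle X (tzero X) t"
  using X unfolding is_tsu_def by blast

lemma tsu_dist_in: "x \<in> tpts X \<Longrightarrow> y \<in> tpts X \<Longrightarrow> tdist X x y \<in> tdists X"
  using X unfolding is_tsu_def by blast

lemma tsu_dist_sym: "x \<in> tpts X \<Longrightarrow> y \<in> tpts X \<Longrightarrow> tdist X x y = tdist X y x"
  using X unfolding is_tsu_def by blast

lemma tsu_dist_eq_zero: "x \<in> tpts X \<Longrightarrow> y \<in> tpts X \<Longrightarrow> tdist X x y = tzero X \<longleftrightarrow> x = y"
  using X unfolding is_tsu_def by blast

lemma tsu_dist_self: "x \<in> tpts X \<Longrightarrow> tdist X x x = tzero X"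
  using tsu_dist_eq_zero by blast

lemma tsu_ultra_triangle:
  assumes "x \<in> tpts X" "y \<in> tpts X" "z \<in> tpts X"
  shows "ultra_triangle X (tdist X x y) (tdist X x z) (tdist X y z)"
  using X assms unfolding is_tsu_def ultra_triangle_def by metis

lemma tless_not_le: "s \<in> tdists X \<Longrightarrow> t \<in> tdists X \<Longrightarrow> tless X s t \<longleftrightarrow> \<not> tle X t s"
  unfolding tless_def using tsu_refl tsu_antisym tsu_total by blast

lemma tless_trans_le:
  "s \<in> tdists X \<Longrightarrow> t \<in> tdists X \<Longrightarrow> u \<in> tdists X \<Longrightarrow> tless X s t \<Longrightarrow> tle X t u \<Longrightarrow> tless X s u"
  using tless_not_le tsu_trans by meson

lemma tle_trans_less:
  "s \<in> tdists X \<Longrightarrow> t \<in> tdists X \<Longrightarrow> u \<in> tdists X \<Longrightarrow> tle X s t \<Longrightarrow> tless X t u \<Longrightarrow> tless X s u"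
  using tless_not_le tsu_trans by meson

lemma tsu_finite_has_greatest:
  "finite L \<Longrightarrow> L \<noteq> {} \<Longrightarrow> L \<subseteq> tdists X \<Longrightarrow> \<exists>m\<in>L. \<forall>t\<in>L. tle X t m"
  by (rule finite_total_has_greatest[of "tdists X"]) (use tsu_refl tsu_trans tsu_total in blast)+

lemma tsu_finite_has_least:
  "finite L \<Longrightarrow> L \<noteq> {} \<Longrightarrow> L \<subseteq> tdists X \<Longrightarrow> \<exists>m\<in>L. \<forall>t\<in>L. tle X m t"
  by (rule finite_total_has_greatest[of "tdists X"]) (use tsu_refl tsu_trans tsu_total in blast)+

end

section \<open>Back and forth\<close>

text \<open>Partial maps are handled through their graphs R; the pairwise condition Q is what makes
  a graph a partial isomorphism.\<close>

definition coherent :: "('p \<Rightarrow> 'p \<Rightarrow> bool) \<Rightarrow> 'p set \<Rightarrow> bool" where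
  "coherent Q R \<longleftrightarrow> (\<forall>p\<in>R. \<forall>q\<in>R. Q p q)"

definition coherent_one_one :: "('a \<times> 'b \<Rightarrow> 'a \<times> 'b \<Rightarrow> bool) \<Rightarrow> 'a set \<Rightarrow> 'b set \<Rightarrow> bool" where
  "coherent_one_one Q A B \<longleftrightarrow>
     (\<forall>a\<in>A. \<forall>b\<in>B. \<forall>b'\<in>B. coherent Q {(a, b), (a, b')} \<longrightarrow> b = b') \<and>
     (\<forall>a\<in>A. \<forall>a'\<in>A. \<forall>b\<in>B. coherent Q {(a, b), (a', b)} \<longrightarrow> a = a')"

lemma coherent_insert:
  "coherent Q (insert p R) \<longleftrightarrow> coherent Q R \<and> Q p p \<and> (\<forall>q\<in>R. Q p q \<and> Q q p)"
  unfolding coherent_def by blast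

lemma coherent_subset: "coherent Q R \<Longrightarrow> R' \<subseteq> R \<Longrightarrow> coherent Q R'"
  unfolding coherent_def by blast

lemma coherent_converse: "coherent Q (R\<inverse>) \<longleftrightarrow> coherent (\<lambda>p q. Q (prod.swap p) (prod.swap q)) R"
proof -
  have "R\<inverse> = prod.swap ` R" by force
  then show ?thesis unfolding coherent_def by simp
qed

lemma coherent_one_one_unique:
  assumes "coherent_one_one Q A B"
  shows "a \<in> A \<Longrightarrow> b \<in> B \<Longrightarrow> b' \<in> B \<Longrightarrow> coherent Q {(a, b), (a, b')} \<Longrightarrow> b = b'"
    and "a \<in> A \<Longrightarrow> a' \<in> A \<Longrightarrow> b \<in> B \<Longrightarrow> coherent Q {(a, b), (a', b)} \<Longrightarrow> a = a'"
  using assms unfolding coherent_one_one_def by blast+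

lemma coherent_total_function:
  assumes coh: "coherent Q R" and R: "R \<subseteq> A \<times> B" "A \<subseteq> Domain R"
    and one_one: "coherent_one_one Q A B"
  shows "\<exists>F. inj_on F A \<and> F ` A \<subseteq> B \<and> (\<forall>a\<in>A. \<forall>a'\<in>A. Q (a, F a) (a', F a')) \<and>
    (\<forall>(a, b)\<in>R. F a = b)"
proof -
  define F where "F a = (SOME b. (a, b) \<in> R)" for a
  have F: "F a = b" if "(a, b) \<in> R" for a b
  proof -
    have "b' = b" if "(a, b') \<in> R" for b'
    proof (rule coherent_one_one_unique(1)[OF one_one])
      show "coherent Q {(a, b'), (a, b)}"
        by (rule coherent_subset[OF coh]) (use that \<open>(a, b) \<in> R\<close> in simp)
    qed (use that \<open>(a, b) \<in> R\<close> R(1) in auto)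
    then show ?thesis unfolding F_def using that by blast
  qed
  have graph: "(a, F a) \<in> R" if "a \<in> A" for a
    using R(2) that F by fastforce
  have "inj_on F A"
  proof (rule inj_onI)
    fix a a' assume "a \<in> A" "a' \<in> A" "F a = F a'"
    show "a = a'"
    proof (rule coherent_one_one_unique(2)[OF one_one])
      show "coherent Q {(a, F a), (a', F a)}"
        by (rule coherent_subset[OF coh])
          (use graph[OF \<open>a \<in> A\<close>] graph[OF \<open>a' \<in> A\<close>] \<open>F a = F a'\<close> in simp)
    qed (use \<open>a \<in> A\<close> \<open>a' \<in> A\<close> graph R(1) in auto)
  qed
  moreover have "F ` A \<subseteq> B" using graph R(1) by blast
  moreover have "\<forall>a\<in>A. \<forall>a'\<in>A. Q (a, F a) (a', F a')"
    using graph coh unfolding coherent_def by blast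
  ultimately show ?thesis using F by blast
qed

lemma finite_forth:
  assumes A: "finite A" and R0: "finite R0" "R0 \<subseteq> A \<times> B" "coherent Q R0"
    and one_one: "coherent_one_one Q A B"
    and forth_ext: "\<And>R a. R0 \<subseteq> R \<Longrightarrow> finite R \<Longrightarrow> R \<subseteq> A \<times> B \<Longrightarrow> coherent Q R \<Longrightarrow> a \<in> A \<Longrightarrow>
      \<exists>b\<in>B. coherent Q (insert (a, b) R)"
  shows "\<exists>F. inj_on F A \<and> F ` A \<subseteq> B \<and> (\<forall>a\<in>A. \<forall>a'\<in>A. Q (a, F a) (a', F a')) \<and>
    (\<forall>(a, b)\<in>R0. F a = b)"
proof -
  have "\<exists>R. R0 \<subseteq> R \<and> finite R \<and> R \<subseteq> A \<times> B \<and> coherent Q R \<and> A' \<subseteq> Domain R"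
    if "A' \<subseteq> A" for A'
    using finite_subset[OF that A] that
  proof (induction A')
    case empty
    then show ?case using R0 by (intro exI[of _ R0]) simp
  next
    case (insert a A')
    then obtain R where R: "R0 \<subseteq> R" "finite R" "R \<subseteq> A \<times> B" "coherent Q R" "A' \<subseteq> Domain R"
      by auto
    moreover obtain b where "b \<in> B" "coherent Q (insert (a, b) R)"
      using forth_ext[OF R(1-4)] insert.prems by auto
    ultimately show ?case using insert.prems by (intro exI[of _ "insert (a, b) R"]) auto
  qed
  then obtain R where R: "R0 \<subseteq> R" "coherent Q R" "R \<subseteq> A \<times> B" "A \<subseteq> Domain R" by (meson order_refl)
  from coherent_total_function[OF R(2-4) one_one] obtain F where
    "inj_on F A" "F ` A \<subseteq> B" "\<forall>a\<in>A. \<forall>a'\<in>A. Q (a, F a) (a', F a')" "\<forall>(a, b)\<in>R. F a = b"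
    by (elim exE conjE)
  with R(1) show ?thesis by (intro exI[of _ F]) auto
qed

lemma back_and_forth:
  assumes A: "countable A" and B: "countable B"
    and R0: "finite R0" "R0 \<subseteq> A \<times> B" "coherent Q R0"
    and one_one: "coherent_one_one Q A B"
    and forth_ext: "\<And>R a. R0 \<subseteq> R \<Longrightarrow> finite R \<Longrightarrow> R \<subseteq> A \<times> B \<Longrightarrow> coherent Q R \<Longrightarrow> a \<in> A \<Longrightarrow>
      \<exists>b\<in>B. coherent Q (insert (a, b) R)"
    and back_ext: "\<And>R b. R0 \<subseteq> R \<Longrightarrow> finite R \<Longrightarrow> R \<subseteq> A \<times> B \<Longrightarrow> coherent Q R \<Longrightarrow> b \<in> B \<Longrightarrow>
      \<exists>a\<in>A. coherent Q (insert (a, b) R)"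
  shows "\<exists>F. bij_betw F A B \<and> (\<forall>a\<in>A. \<forall>a'\<in>A. Q (a, F a) (a', F a')) \<and> (\<forall>(a, b)\<in>R0. F a = b)"
proof -
  define ok where "ok R \<longleftrightarrow> R0 \<subseteq> R \<and> finite R \<and> R \<subseteq> A \<times> B \<and> coherent Q R" for R
  have forth_ok: "\<exists>b. ok (insert (a, b) R)" if "ok R" "a \<in> A" for R a
  proof -
    from \<open>ok R\<close> have "R0 \<subseteq> R" "finite R" "R \<subseteq> A \<times> B" "coherent Q R" unfolding ok_def by auto
    from forth_ext[OF this \<open>a \<in> A\<close>] obtain b where "b \<in> B" "coherent Q (insert (a, b) R)" by blast
    with \<open>ok R\<close> \<open>a \<in> A\<close> show ?thesis unfolding ok_def by auto
  qed
  have back_ok: "\<exists>a. ok (insert (a, b) R)" if "ok R" "b \<in> B" for R b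
  proof -
    from \<open>ok R\<close> have "R0 \<subseteq> R" "finite R" "R \<subseteq> A \<times> B" "coherent Q R" unfolding ok_def by auto
    from back_ext[OF this \<open>b \<in> B\<close>] obtain a where "a \<in> A" "coherent Q (insert (a, b) R)" by blast
    with \<open>ok R\<close> \<open>b \<in> B\<close> show ?thesis unfolding ok_def by auto
  qed
  have extend: "\<exists>R'. ok R' \<and> R \<subseteq> R' \<and> (a \<in> A \<longrightarrow> a \<in> Domain R') \<and> (b \<in> B \<longrightarrow> b \<in> Range R')"
    if "ok R" for R a b
  proof -
    obtain R1 where R1: "ok R1" "R \<subseteq> R1" "a \<in> A \<longrightarrow> a \<in> Domain R1"
    proof (cases "a \<in> A")
      case True
      with forth_ok[OF \<open>ok R\<close>] obtain b' where "ok (insert (a, b') R)" by blast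
      then show ?thesis by (intro that[of "insert (a, b') R"]) auto
    next
      case False
      with \<open>ok R\<close> show ?thesis by (intro that[of R]) auto
    qed
    obtain R2 where R2: "ok R2" "R1 \<subseteq> R2" "b \<in> B \<longrightarrow> b \<in> Range R2"
    proof (cases "b \<in> B")
      case True
      with back_ok[OF \<open>ok R1\<close>] obtain a' where "ok (insert (a', b) R1)" by blast
      then show ?thesis by (intro that[of "insert (a', b) R1"]) auto
    next
      case False
      with \<open>ok R1\<close> show ?thesis by (intro that[of R1]) auto
    qed
    from R1 R2 show ?thesis by (intro exI[of _ R2]) auto
  qed
  define step where "step n R = (SOME R'. ok R' \<and> R \<subseteq> R' \<and>
      (from_nat_into A n \<in> A \<longrightarrow> from_nat_into A n \<in> Domain R') \<and>
      (from_nat_into B n \<in> B \<longrightarrow> from_nat_into B n \<in> Range R'))" for n R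
  have step: "ok (step n R) \<and> R \<subseteq> step n R \<and>
      (from_nat_into A n \<in> A \<longrightarrow> from_nat_into A n \<in> Domain (step n R)) \<and>
      (from_nat_into B n \<in> B \<longrightarrow> from_nat_into B n \<in> Range (step n R))" if "ok R" for n R
    unfolding step_def by (rule someI_ex) (rule extend[OF that])
  define Rs where "Rs = rec_nat R0 step"
  have Rs_0: "Rs 0 = R0" and Rs_Suc: "Rs (Suc n) = step n (Rs n)" for n
    unfolding Rs_def by simp_all
  have ok_Rs: "ok (Rs n)" for n
  proof (induction n)
    case 0
    show ?case using R0 unfolding Rs_0 ok_def by simp
  next
    case (Suc n)
    then show ?case using step[OF Suc] unfolding Rs_Suc by blast
  qed
  have "incseq Rs"
    by (rule incseq_SucI) (use step[OF ok_Rs] in \<open>simp add: Rs_Suc\<close>)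
  define RR where "RR = (\<Union>n. Rs n)"
  have common_stage: "\<exists>n. p \<in> Rs n \<and> q \<in> Rs n" if pq: "p \<in> RR" "q \<in> RR" for p q
  proof -
    obtain i j where "p \<in> Rs i" "q \<in> Rs j" using pq unfolding RR_def by blast
    moreover have "Rs i \<subseteq> Rs (max i j)" "Rs j \<subseteq> Rs (max i j)"
      using \<open>incseq Rs\<close> unfolding incseq_def by simp_all
    ultimately show ?thesis by blast
  qed
  have coh: "coherent Q RR"
    unfolding coherent_def
  proof (intro ballI)
    fix p q assume "p \<in> RR" "q \<in> RR"
    then obtain n where "p \<in> Rs n" "q \<in> Rs n" using common_stage by blast
    then show "Q p q" using ok_Rs[of n] unfolding ok_def coherent_def by blast
  qed
  have RR: "RR \<subseteq> A \<times> B" "R0 \<subseteq> RR" using ok_Rs Rs_0 unfolding RR_def ok_def by blast+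
  have dom: "A \<subseteq> Domain RR"
  proof
    fix a assume "a \<in> A"
    then obtain n where "from_nat_into A n = a" using from_nat_into_surj[OF A] by blast
    with step[where n = n, OF ok_Rs[of n]] \<open>a \<in> A\<close> have "a \<in> Domain (Rs (Suc n))" by (simp add: Rs_Suc)
    then show "a \<in> Domain RR" unfolding RR_def by blast
  qed
  have ran: "B \<subseteq> Range RR"
  proof
    fix b assume "b \<in> B"
    then obtain n where "from_nat_into B n = b" using from_nat_into_surj[OF B] by blast
    with step[where n = n, OF ok_Rs[of n]] \<open>b \<in> B\<close> have "b \<in> Range (Rs (Suc n))" by (simp add: Rs_Suc)
    then show "b \<in> Range RR" unfolding RR_def by blast
  qed
  obtain F where F: "inj_on F A" "F ` A \<subseteq> B" "\<forall>a\<in>A. \<forall>a'\<in>A. Q (a, F a) (a', F a')"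
    "\<forall>(a, b)\<in>RR. F a = b"
    using coherent_total_function[OF coh RR(1) dom one_one] by blast
  have "B \<subseteq> F ` A" using ran RR(1) F(4) by force
  with F(1,2) have "bij_betw F A B" unfolding bij_betw_def by blast
  moreover have "\<forall>(a, b)\<in>R0. F a = b" using F(4) RR(2) by auto
  ultimately show ?thesis using F(3) by (intro exI[of _ F]) blast
qed

section \<open>The extension property\<close>

definition ext_prop :: "('a, 'b) tsu \<Rightarrow> bool" where
  "ext_prop X \<longleftrightarrow> is_tsu X \<and>
     (\<forall>t\<in>tdists X. \<exists>u\<in>tdists X. tless X t u) \<and>
     (\<forall>s\<in>tdists X. \<forall>t\<in>tdists X. tless X s t \<longrightarrow> (\<exists>u\<in>tdists X. tless X s u \<and> tless X u t)) \<and>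
     (\<forall>S r. finite S \<and> S \<subseteq> tpts X \<and> (\<forall>x\<in>S. r x \<in> tdists X \<and> r x \<noteq> tzero X) \<and>
        (\<forall>x\<in>S. \<forall>y\<in>S. ultra_triangle X (r x) (r y) (tdist X x y)) \<longrightarrow>
        (\<exists>p\<in>tpts X. \<forall>x\<in>S. tdist X p x = r x))"

lemma ext_propI:
  assumes "is_tsu X"
    and "\<And>t. t \<in> tdists X \<Longrightarrow> \<exists>u\<in>tdists X. tless X t u"
    and "\<And>s t. s \<in> tdists X \<Longrightarrow> t \<in> tdists X \<Longrightarrow> tless X s t \<Longrightarrow>
      \<exists>u\<in>tdists X. tless X s u \<and> tless X u t"
    and "\<And>S r. finite S \<Longrightarrow> S \<subseteq> tpts X \<Longrightarrow> \<forall>x\<in>S. r x \<in> tdists X \<and> r x \<noteq> tzero X \<Longrightarrow>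
      \<forall>x\<in>S. \<forall>y\<in>S. ultra_triangle X (r x) (r y) (tdist X x y) \<Longrightarrow> \<exists>p\<in>tpts X. \<forall>x\<in>S. tdist X p x = r x"
  shows "ext_prop X"
  using assms unfolding ext_prop_def by auto

lemma
  assumes "ext_prop X"
  shows ext_prop_is_tsu: "is_tsu X"
    and ext_prop_unbounded: "t \<in> tdists X \<Longrightarrow> \<exists>u\<in>tdists X. tless X t u"
    and ext_prop_dense: "s \<in> tdists X \<Longrightarrow> t \<in> tdists X \<Longrightarrow> tless X s t \<Longrightarrow>
      \<exists>u\<in>tdists X. tless X s u \<and> tless X u t"
  using assms unfolding ext_prop_def by blast+

lemma ext_prop_one_point:
  assumes "ext_prop X" "finite S" "S \<subseteq> tpts X"
    "\<And>x. x \<in> S \<Longrightarrow> r x \<in> tdists X \<and> r x \<noteq> tzero X"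
    "\<And>x y. x \<in> S \<Longrightarrow> y \<in> S \<Longrightarrow> ultra_triangle X (r x) (r y) (tdist X x y)"
  shows "\<exists>p\<in>tpts X. \<forall>x\<in>S. tdist X p x = r x"
proof -
  have "\<forall>S r. finite S \<and> S \<subseteq> tpts X \<and> (\<forall>x\<in>S. r x \<in> tdists X \<and> r x \<noteq> tzero X) \<and>
        (\<forall>x\<in>S. \<forall>y\<in>S. ultra_triangle X (r x) (r y) (tdist X x y)) \<longrightarrow>
        (\<exists>p\<in>tpts X. \<forall>x\<in>S. tdist X p x = r x)"
    using assms(1) unfolding ext_prop_def by blast
  from this[rule_format, of S r] show ?thesis using assms(2-5) by auto
qed

lemma
  assumes "substructure A X"
  shows substructure_is_tsu: "is_tsu A"
    and substructure_pts: "tpts A \<subseteq> tpts X"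
    and substructure_dists: "tdists A \<subseteq> tdists X"
    and substructure_zero: "tzero A = tzero X"
    and substructure_le: "s \<in> tdists A \<Longrightarrow> t \<in> tdists A \<Longrightarrow> tle X s t \<longleftrightarrow> tle A s t"
    and substructure_dist: "x \<in> tpts A \<Longrightarrow> y \<in> tpts A \<Longrightarrow> tdist X x y = tdist A x y"
  using assms unfolding substructure_def dc_emb_def by auto

definition dist_emb :: "('a, 'b) tsu \<Rightarrow> ('c, 'd) tsu \<Rightarrow> ('b \<Rightarrow> 'd) \<Rightarrow> bool" where
  "dist_emb X Y g \<longleftrightarrow> g ` tdists X \<subseteq> tdists Y \<and>
     (\<forall>s\<in>tdists X. \<forall>t\<in>tdists X. tle Y (g s) (g t) \<longleftrightarrow> tle X s t) \<and> g (tzero X) = tzero Y"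

lemma dc_emb_iff_dist_emb:
  "dc_emb X Y f g \<longleftrightarrow> dist_emb X Y g \<and> inj_on f (tpts X) \<and> f ` tpts X \<subseteq> tpts Y \<and>
     (\<forall>x\<in>tpts X. \<forall>x'\<in>tpts X. tdist Y (f x) (f x') = g (tdist X x x'))"
  unfolding dc_emb_def dist_emb_def by blast

lemma
  assumes "dist_emb X Y g"
  shows dist_emb_in: "s \<in> tdists X \<Longrightarrow> g s \<in> tdists Y"
    and dist_emb_le: "s \<in> tdists X \<Longrightarrow> t \<in> tdists X \<Longrightarrow> tle Y (g s) (g t) \<longleftrightarrow> tle X s t"
    and dist_emb_zero: "g (tzero X) = tzero Y"
  using assms unfolding dist_emb_def by blast+

lemma dc_emb_cong:
  assumes "is_tsu X" "dc_emb X Y f g" "\<And>t. t \<in> tdists X \<Longrightarrow> g' t = g t"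
  shows "dc_emb X Y f g'"
  using assms(2,3) tsu_zero_in[OF assms(1)] tsu_dist_in[OF assms(1)]
  unfolding dc_emb_def by (auto simp: image_subset_iff)

context
  fixes X :: "('a, 'b) tsu" and Y :: "('c, 'd) tsu" and g
  assumes X: "is_tsu X" and g: "dist_emb X Y g"
begin

lemma dist_emb_inj: "inj_on g (tdists X)"
  by (rule inj_onI) (metis dist_emb_le[OF g] tsu_antisym[OF X] tsu_refl[OF X])

lemma dist_emb_eq_zero: "s \<in> tdists X \<Longrightarrow> g s = tzero Y \<longleftrightarrow> s = tzero X"
  using dist_emb_inj dist_emb_zero[OF g] tsu_zero_in[OF X] unfolding inj_on_def by metis

lemma dist_emb_tless: "s \<in> tdists X \<Longrightarrow> t \<in> tdists X \<Longrightarrow> tless Y (g s) (g t) \<longleftrightarrow> tless X s t"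
  using dist_emb_le[OF g] dist_emb_inj unfolding tless_def inj_on_def by metis

lemma dist_emb_ultra_triangle_iff:
  "a \<in> tdists X \<Longrightarrow> b \<in> tdists X \<Longrightarrow> c \<in> tdists X \<Longrightarrow>
    ultra_triangle Y (g a) (g b) (g c) \<longleftrightarrow> ultra_triangle X a b c"
  unfolding ultra_triangle_def using dist_emb_le[OF g] by simp

lemma dist_emb_inv_into:
  assumes "bij_betw g (tdists X) (tdists Y)"
  shows "dist_emb Y X (inv_into (tdists X) g)"
proof -
  have inv: "inv_into (tdists X) g t \<in> tdists X" "g (inv_into (tdists X) g t) = t" if "t \<in> tdists Y" for t
    using assms that by (auto intro: bij_betw_apply[OF bij_betw_inv_into] bij_betw_inv_into_right)
  have "inv_into (tdists X) g (tzero Y) = tzero X"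
    using assms dist_emb_zero[OF g] tsu_zero_in[OF X] by (metis bij_betw_inv_into_left)
  then show ?thesis
    using inv dist_emb_le[OF g] unfolding dist_emb_def by (metis image_subsetI)
qed

end

lemma dc_emb_tless:
  assumes "is_tsu X" "dc_emb X Y f g" "s \<in> tdists X" "t \<in> tdists X"
  shows "tless Y (g s) (g t) \<longleftrightarrow> tless X s t"
proof -
  have "dist_emb X Y g" using assms(2) unfolding dc_emb_iff_dist_emb by blast
  then show ?thesis by (rule dist_emb_tless[OF assms(1) _ assms(3,4)])
qed

definition same_order :: "('a, 'b) tsu \<Rightarrow> ('c, 'd) tsu \<Rightarrow> 'b \<times> 'd \<Rightarrow> 'b \<times> 'd \<Rightarrow> bool" where
  "same_order X Y p q \<longleftrightarrow> (tle X (fst p) (fst q) \<longleftrightarrow> tle Y (snd p) (snd q))"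

lemma coherent_same_order_converse:
  "coherent (same_order Y X) (R\<inverse>) \<longleftrightarrow> coherent (same_order X Y) R"
proof -
  have "(\<lambda>p q. same_order Y X (prod.swap p) (prod.swap q)) = same_order X Y"
    unfolding same_order_def by (intro ext) auto
  then show ?thesis by (simp add: coherent_converse)
qed

lemma same_order_one_one:
  assumes X: "is_tsu X" and Y: "is_tsu Y"
  shows "coherent_one_one (same_order X Y) (tdists X) (tdists Y)"
  unfolding coherent_one_one_def coherent_def same_order_def
  using tsu_refl[OF X] tsu_refl[OF Y] tsu_antisym[OF X] tsu_antisym[OF Y] by simp

lemma same_order_strict:
  assumes X: "is_tsu X" and Y: "is_tsu Y"
    and st: "s \<in> tdists X" "s' \<in> tdists X" "t \<in> tdists Y" "t' \<in> tdists Y" "s \<noteq> s'"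
    and lt: "tless X s s' \<Longrightarrow> tless Y t t'" "tless X s' s \<Longrightarrow> tless Y t' t"
  shows "same_order X Y (s, t) (s', t') \<and> same_order X Y (s', t') (s, t)"
proof -
  have "tless X s s' \<or> tless X s' s" using tsu_total[OF X st(1,2)] st(5) unfolding tless_def by auto
  then show ?thesis
    using lt tless_not_le[OF X st(1,2)] tless_not_le[OF X st(2,1)]
      tless_not_le[OF Y st(3,4)] tless_not_le[OF Y st(4,3)]
    unfolding same_order_def tless_def by auto
qed

text \<open>The image of a new distance s is chosen strictly above the image m of the largest element of
  the domain below s, and strictly below the images of all elements above s.\<close>

lemma same_order_forth:
  assumes X: "is_tsu X" and Y: "ext_prop Y"
    and R: "(tzero X, tzero Y) \<in> R" "finite R" "R \<subseteq> tdists X \<times> tdists Y"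
      "coherent (same_order X Y) R"
    and s: "s \<in> tdists X"
  shows "\<exists>t\<in>tdists Y. coherent (same_order X Y) (insert (s, t) R)"
proof (cases "s \<in> Domain R")
  case True
  then obtain t where "(s, t) \<in> R" by blast
  then have "insert (s, t) R = R" "t \<in> tdists Y" using R(3) by auto
  then show ?thesis using R(4) by metis
next
  case new: False
  have Y': "is_tsu Y" using Y by (rule ext_prop_is_tsu)
  define L where "L = snd ` {p\<in>R. tle X (fst p) s}"
  define H where "H = snd ` {p\<in>R. tle X s (fst p)}"
  have L: "finite L" "L \<subseteq> tdists Y" and H: "finite H" "H \<subseteq> tdists Y"
    using R(2,3) unfolding L_def H_def by auto
  have "tzero Y \<in> L" using R(1) tsu_zero_le[OF X s] unfolding L_def by force
  then obtain m where m: "m \<in> L" "\<forall>t\<in>L. tle Y t m"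
    using tsu_finite_has_greatest[OF Y' L(1)] L(2) by blast
  have mY: "m \<in> tdists Y" using m(1) L(2) by blast
  have "\<exists>t\<in>tdists Y. tless Y m t \<and> (\<forall>h\<in>H. tless Y t h)"
  proof (cases "H = {}")
    case True
    then show ?thesis using ext_prop_unbounded[OF Y mY] by blast
  next
    case False
    then obtain h where h: "h \<in> H" "\<forall>t\<in>H. tle Y h t"
      using tsu_finite_has_least[OF Y' H(1)] H(2) by blast
    obtain sm where sm: "(sm, m) \<in> R" "tle X sm s" using m(1) unfolding L_def by auto
    obtain sh where sh: "(sh, h) \<in> R" "tle X s sh" using h(1) unfolding H_def by auto
    have smX: "sm \<in> tdists X" and shX: "sh \<in> tdists X" and hY: "h \<in> tdists Y"
      using sm(1) sh(1) R(3) by auto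
    have "tless X sm s" using sm new unfolding tless_def by auto
    then have "tless X sm sh" using tless_trans_le[OF X smX s shX] sh(2) by blast
    then have "\<not> tle Y h m"
      using R(4) sm(1) sh(1) tless_not_le[OF X smX shX] unfolding coherent_def same_order_def by force
    then have "tless Y m h" using tless_not_le[OF Y' mY hY] by blast
    then obtain u where u: "u \<in> tdists Y" "tless Y m u" "tless Y u h"
      using ext_prop_dense[OF Y mY hY] by blast
    have "tless Y u h'" if "h' \<in> H" for h'
      using tless_trans_le[OF Y' u(1) hY, of h'] u(3) h(2) that H(2) by blast
    with u show ?thesis by blast
  qed
  then obtain t where t: "t \<in> tdists Y" "tless Y m t" "\<forall>h\<in>H. tless Y t h" by blast
  have "same_order X Y (s, t) (s', t') \<and> same_order X Y (s', t') (s, t)" if "(s', t') \<in> R" for s' t'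
  proof (rule same_order_strict[OF X Y' s _ t(1)])
    show s': "s' \<in> tdists X" "t' \<in> tdists Y" using that R(3) by auto
    show "s \<noteq> s'" using new that by blast
    show "tless Y t t'" if "tless X s s'"
      using t(3) \<open>(s', t') \<in> R\<close> that unfolding H_def tless_def by force
    show "tless Y t' t" if "tless X s' s"
    proof -
      have "tle Y t' m" using m(2) \<open>(s', t') \<in> R\<close> that unfolding L_def tless_def by force
      then show ?thesis using tle_trans_less[OF Y' s'(2) mY t(1)] t(2) by blast
    qed
  qed
  then have "coherent (same_order X Y) (insert (s, t) R)"
    using R(4) tsu_refl[OF X s] tsu_refl[OF Y' t(1)]
    unfolding coherent_insert same_order_def by auto
  with t(1) show ?thesis by blast
qed

lemma dist_emb_graph:
  assumes A: "substructure A X" and g: "dist_emb A Y g"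
  shows "(\<lambda>t. (t, g t)) ` tdists A \<subseteq> tdists X \<times> tdists Y"
    and "(tzero X, tzero Y) \<in> (\<lambda>t. (t, g t)) ` tdists A"
    and "coherent (same_order X Y) ((\<lambda>t. (t, g t)) ` tdists A)"
  using substructure_dists[OF A] dist_emb_in[OF g] dist_emb_zero[OF g]
    tsu_zero_in[OF substructure_is_tsu[OF A]] substructure_zero[OF A]
    dist_emb_le[OF g] substructure_le[OF A]
  unfolding coherent_def same_order_def by (auto simp: image_iff)

lemma dist_emb_of_same_order:
  assumes "g ` tdists X \<subseteq> tdists Y" "\<forall>s\<in>tdists X. \<forall>t\<in>tdists X. same_order X Y (s, g s) (t, g t)"
    "g (tzero X) = tzero Y"
  shows "dist_emb X Y g"
  using assms unfolding dist_emb_def same_order_def by auto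

lemma ext_prop_dists_emb:
  assumes X: "is_tsu X" "finite (tdists X)" and Y: "ext_prop Y"
    and A: "substructure A X" and g0: "dist_emb A Y g0"
  shows "\<exists>g. dist_emb X Y g \<and> (\<forall>t\<in>tdists A. g t = g0 t)"
proof -
  let ?R0 = "(\<lambda>t. (t, g0 t)) ` tdists A"
  note R0 = dist_emb_graph[OF A g0]
  have "finite ?R0" using finite_subset[OF substructure_dists[OF A] X(2)] by simp
  moreover have "\<exists>t\<in>tdists Y. coherent (same_order X Y) (insert (s, t) R)"
    if "?R0 \<subseteq> R" "finite R" "R \<subseteq> tdists X \<times> tdists Y" "coherent (same_order X Y) R"
      "s \<in> tdists X" for R s
    using same_order_forth[OF X(1) Y _ that(2-5)] that(1) R0(2) by blast
  ultimately obtain g where g: "g ` tdists X \<subseteq> tdists Y"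
    "\<forall>s\<in>tdists X. \<forall>t\<in>tdists X. same_order X Y (s, g s) (t, g t)" "\<forall>(s, t)\<in>?R0. g s = t"
    using finite_forth[OF X(2) _ R0(1,3) same_order_one_one[OF X(1) ext_prop_is_tsu[OF Y]]]
    by blast
  have "dist_emb X Y g" using g R0(2) by (intro dist_emb_of_same_order) auto
  with g(3) show ?thesis by auto
qed

lemma ext_prop_dists_iso:
  assumes X: "ext_prop X" "countable (tdists X)" and Y: "ext_prop Y" "countable (tdists Y)"
    and A: "substructure A X" "finite (tdists A)" and g0: "dist_emb A Y g0"
  shows "\<exists>g. dist_emb X Y g \<and> bij_betw g (tdists X) (tdists Y) \<and> (\<forall>t\<in>tdists A. g t = g0 t)"
proof -
  have X': "is_tsu X" and Y': "is_tsu Y" using X(1) Y(1) ext_prop_is_tsu by blast+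
  let ?R0 = "(\<lambda>t. (t, g0 t)) ` tdists A"
  note R0 = dist_emb_graph[OF A(1) g0]
  have back_ext: "\<exists>s\<in>tdists X. coherent (same_order X Y) (insert (s, t) R)"
    if "?R0 \<subseteq> R" "finite R" "R \<subseteq> tdists X \<times> tdists Y" "coherent (same_order X Y) R"
      "t \<in> tdists Y" for R t
  proof -
    have "(tzero Y, tzero X) \<in> R\<inverse>" "finite (R\<inverse>)" "R\<inverse> \<subseteq> tdists Y \<times> tdists X"
      using that R0(2) by auto
    moreover have "coherent (same_order Y X) (R\<inverse>)"
      using that(4) by (simp add: coherent_same_order_converse)
    ultimately obtain s where "s \<in> tdists X" "coherent (same_order Y X) (insert (t, s) (R\<inverse>))"
      using same_order_forth[OF Y' X(1) _ _ _ _ \<open>t \<in> tdists Y\<close>] by blast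
    moreover have "insert (t, s) (R\<inverse>) = (insert (s, t) R)\<inverse>" by auto
    ultimately show ?thesis by (auto simp: coherent_same_order_converse)
  qed
  have forth_ext: "\<exists>t\<in>tdists Y. coherent (same_order X Y) (insert (s, t) R)"
    if "?R0 \<subseteq> R" "finite R" "R \<subseteq> tdists X \<times> tdists Y" "coherent (same_order X Y) R"
      "s \<in> tdists X" for R s
    using same_order_forth[OF X' Y(1) _ that(2-5)] that(1) R0(2) by blast
  obtain g where g: "bij_betw g (tdists X) (tdists Y)"
    "\<forall>s\<in>tdists X. \<forall>t\<in>tdists X. same_order X Y (s, g s) (t, g t)" "\<forall>(s, t)\<in>?R0. g s = t"
    using back_and_forth[OF X(2) Y(2) _ R0(1,3) same_order_one_one[OF X' Y'] forth_ext back_ext] A(2)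
    by blast
  have "dist_emb X Y g"
    using g R0(2) bij_betw_imp_surj_on[OF g(1)] by (intro dist_emb_of_same_order) auto
  with g(1,3) show ?thesis by auto
qed

definition same_dist :: "('a, 'b) tsu \<Rightarrow> ('c, 'd) tsu \<Rightarrow> ('b \<Rightarrow> 'd) \<Rightarrow> 'a \<times> 'c \<Rightarrow> 'a \<times> 'c \<Rightarrow> bool"
  where "same_dist X Y g p q \<longleftrightarrow> tdist Y (snd p) (snd q) = g (tdist X (fst p) (fst q))"

lemma same_dist_one_one:
  assumes X: "is_tsu X" and Y: "is_tsu Y" and g: "dist_emb X Y g"
  shows "coherent_one_one (same_dist X Y g) (tpts X) (tpts Y)"
  unfolding coherent_one_one_def
proof (intro conjI ballI impI)
  fix x y y' assume xy: "x \<in> tpts X" "y \<in> tpts Y" "y' \<in> tpts Y"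
    and "coherent (same_dist X Y g) {(x, y), (x, y')}"
  then have "tdist Y y y' = g (tdist X x x)" unfolding coherent_def same_dist_def by auto
  with xy show "y = y'"
    using tsu_dist_self[OF X] dist_emb_zero[OF g] tsu_dist_eq_zero[OF Y] by simp
next
  fix x x' y assume xy: "x \<in> tpts X" "x' \<in> tpts X" "y \<in> tpts Y"
    and "coherent (same_dist X Y g) {(x, y), (x', y)}"
  then have "g (tdist X x x') = tzero Y"
    using tsu_dist_self[OF Y] unfolding coherent_def same_dist_def by auto
  with xy show "x = x'"
    using dist_emb_eq_zero[OF X g] tsu_dist_in[OF X] tsu_dist_eq_zero[OF X] by simp
qed

lemma coherent_same_dist_converse:
  assumes X: "is_tsu X" and Y: "is_tsu Y" and g: "bij_betw g (tdists X) (tdists Y)"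
    and R: "R \<subseteq> tpts X \<times> tpts Y"
  shows "coherent (same_dist Y X (inv_into (tdists X) g)) (R\<inverse>) \<longleftrightarrow> coherent (same_dist X Y g) R"
proof -
  have "same_dist Y X (inv_into (tdists X) g) (prod.swap p) (prod.swap q) \<longleftrightarrow> same_dist X Y g p q"
    if "p \<in> R" "q \<in> R" for p q
  proof -
    have "tdist X (fst p) (fst q) \<in> tdists X" "tdist Y (snd p) (snd q) \<in> tdists Y"
      using that R by (auto simp: mem_Times_iff intro!: tsu_dist_in[OF X] tsu_dist_in[OF Y])
    then show ?thesis
      unfolding same_dist_def using bij_betw_inv_into_left[OF g] bij_betw_inv_into_right[OF g] by auto
  qed
  then show ?thesis unfolding coherent_converse unfolding coherent_def by auto
qed

lemma same_dist_forth:
  assumes X: "is_tsu X" and Y: "ext_prop Y" and g: "dist_emb X Y g"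
    and R: "finite R" "R \<subseteq> tpts X \<times> tpts Y" "coherent (same_dist X Y g) R"
    and x: "x \<in> tpts X"
  shows "\<exists>y\<in>tpts Y. coherent (same_dist X Y g) (insert (x, y) R)"
proof (cases "x \<in> Domain R")
  case True
  then obtain y where "(x, y) \<in> R" by blast
  then have "insert (x, y) R = R" "y \<in> tpts Y" using R(2) by auto
  then show ?thesis using R(3) by metis
next
  case new: False
  have Y': "is_tsu Y" using Y by (rule ext_prop_is_tsu)
  define pre where "pre y = (SOME x'. (x', y) \<in> R)" for y
  have pre: "pre y = x'" if "(x', y) \<in> R" for x' y
  proof -
    have "x'' = x'" if "(x'', y) \<in> R" for x''
      using coherent_one_one_unique(2)[OF same_dist_one_one[OF X Y' g], of x'' x' y]
        coherent_subset[OF R(3), of "{(x'', y), (x', y)}"] that \<open>(x', y) \<in> R\<close> R(2) by auto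
    then show ?thesis unfolding pre_def using that by blast
  qed
  define r where "r y = g (tdist X x (pre y))" for y
  have r: "r y = g (tdist X x x')" if "(x', y) \<in> R" for x' y
    unfolding r_def pre[OF that] ..
  have "\<exists>p\<in>tpts Y. \<forall>y\<in>Range R. tdist Y p y = r y"
  proof (rule ext_prop_one_point[OF Y])
    show "finite (Range R)" "Range R \<subseteq> tpts Y" using R(1,2) by (auto simp: finite_Range)
  next
    fix y assume "y \<in> Range R"
    then obtain x' where x': "(x', y) \<in> R" by blast
    with R(2) new have "x' \<in> tpts X" "x' \<noteq> x" by auto
    then show "r y \<in> tdists Y \<and> r y \<noteq> tzero Y"
      using r[OF x'] x tsu_dist_in[OF X] tsu_dist_eq_zero[OF X] dist_emb_in[OF g]
        dist_emb_eq_zero[OF X g] by auto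
  next
    fix y1 y2 assume "y1 \<in> Range R" "y2 \<in> Range R"
    then obtain x1 x2 where x12: "(x1, y1) \<in> R" "(x2, y2) \<in> R" by blast
    with R(2) have "x1 \<in> tpts X" "x2 \<in> tpts X" by auto
    then have "ultra_triangle Y (g (tdist X x x1)) (g (tdist X x x2)) (g (tdist X x1 x2))"
      using dist_emb_ultra_triangle_iff[OF X g] tsu_ultra_triangle[OF X x] tsu_dist_in[OF X] x by simp
    moreover have "tdist Y y1 y2 = g (tdist X x1 x2)"
      using R(3) x12 unfolding coherent_def same_dist_def by force
    ultimately show "ultra_triangle Y (r y1) (r y2) (tdist Y y1 y2)" using r x12 by simp
  qed
  then obtain p where p: "p \<in> tpts Y" "\<forall>y\<in>Range R. tdist Y p y = r y" by blast
  have "same_dist X Y g (x, p) q \<and> same_dist X Y g q (x, p)" if "q \<in> R" for q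
  proof -
    obtain x' y where q: "q = (x', y)" "(x', y) \<in> R" using \<open>q \<in> R\<close> by (cases q) auto
    with R(2) have "x' \<in> tpts X" "y \<in> tpts Y" by auto
    with p q r[OF q(2)] show ?thesis
      unfolding same_dist_def using tsu_dist_sym[OF X x] tsu_dist_sym[OF Y' p(1)] by force
  qed
  moreover have "same_dist X Y g (x, p) (x, p)"
    unfolding same_dist_def using tsu_dist_self[OF X x] tsu_dist_self[OF Y' p(1)] dist_emb_zero[OF g]
    by simp
  ultimately have "coherent (same_dist X Y g) (insert (x, p) R)"
    using R(3) unfolding coherent_insert by blast
  with p(1) show ?thesis by blast
qed

lemma dc_emb_graph:
  assumes A: "substructure A X" and f: "dc_emb A Y f g"
  shows "(\<lambda>x. (x, f x)) ` tpts A \<subseteq> tpts X \<times> tpts Y"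
    and "coherent (same_dist X Y g) ((\<lambda>x. (x, f x)) ` tpts A)"
  using substructure_pts[OF A] substructure_dist[OF A] f
  unfolding coherent_def same_dist_def dc_emb_def by auto

lemma dc_emb_of_same_dist:
  assumes "dist_emb X Y g" "inj_on f (tpts X)" "f ` tpts X \<subseteq> tpts Y"
    "\<forall>x\<in>tpts X. \<forall>x'\<in>tpts X. same_dist X Y g (x, f x) (x', f x')"
  shows "dc_emb X Y f g"
  using assms unfolding dc_emb_iff_dist_emb same_dist_def by simp

lemma ext_prop_points_emb:
  assumes X: "is_tsu X" "finite (tpts X)" and Y: "ext_prop Y" and g: "dist_emb X Y g"
    and A: "substructure A X" and f0: "dc_emb A Y f0 g"
  shows "\<exists>f. dc_emb X Y f g \<and> (\<forall>x\<in>tpts A. f x = f0 x)"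
proof -
  let ?R0 = "(\<lambda>x. (x, f0 x)) ` tpts A"
  note R0 = dc_emb_graph[OF A f0]
  have "finite ?R0" using finite_subset[OF substructure_pts[OF A] X(2)] by simp
  then obtain f where f: "inj_on f (tpts X)" "f ` tpts X \<subseteq> tpts Y"
    "\<forall>x\<in>tpts X. \<forall>x'\<in>tpts X. same_dist X Y g (x, f x) (x', f x')" "\<forall>(x, y)\<in>?R0. f x = y"
    using finite_forth[OF X(2) _ R0 same_dist_one_one[OF X(1) ext_prop_is_tsu[OF Y] g]
        same_dist_forth[OF X(1) Y g]]
    by blast
  have "dc_emb X Y f g" using g f(1-3) by (rule dc_emb_of_same_dist)
  with f(4) show ?thesis by auto
qed

lemma ext_prop_points_iso:
  assumes X: "ext_prop X" "countable (tpts X)" and Y: "ext_prop Y" "countable (tpts Y)"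
    and g: "dist_emb X Y g" "bij_betw g (tdists X) (tdists Y)"
    and A: "substructure A X" "finite (tpts A)" and f0: "dc_emb A Y f0 g"
  shows "\<exists>f. dc_iso X Y f g \<and> (\<forall>x\<in>tpts A. f x = f0 x)"
proof -
  have X': "is_tsu X" and Y': "is_tsu Y" using X(1) Y(1) ext_prop_is_tsu by blast+
  let ?R0 = "(\<lambda>x. (x, f0 x)) ` tpts A"
  let ?h = "inv_into (tdists X) g"
  note R0 = dc_emb_graph[OF A(1) f0]
  have back_ext: "\<exists>x\<in>tpts X. coherent (same_dist X Y g) (insert (x, y) R)"
    if "finite R" "R \<subseteq> tpts X \<times> tpts Y" "coherent (same_dist X Y g) R" "y \<in> tpts Y" for R y
  proof -
    have "finite (R\<inverse>)" "R\<inverse> \<subseteq> tpts Y \<times> tpts X" using that by auto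
    moreover have "coherent (same_dist Y X ?h) (R\<inverse>)"
      using that(3) coherent_same_dist_converse[OF X' Y' g(2) that(2)] by blast
    ultimately obtain x where x: "x \<in> tpts X" "coherent (same_dist Y X ?h) (insert (y, x) (R\<inverse>))"
      using same_dist_forth[OF Y' X(1) dist_emb_inv_into[OF X' g] _ _ _ \<open>y \<in> tpts Y\<close>] by blast
    have "insert (y, x) (R\<inverse>) = (insert (x, y) R)\<inverse>" by auto
    with x that(2,4) show ?thesis using coherent_same_dist_converse[OF X' Y' g(2)] by auto
  qed
  obtain f where f: "bij_betw f (tpts X) (tpts Y)"
    "\<forall>x\<in>tpts X. \<forall>x'\<in>tpts X. same_dist X Y g (x, f x) (x', f x')" "\<forall>(x, y)\<in>?R0. f x = y"
    using back_and_forth[OF X(2) Y(2) _ R0 same_dist_one_one[OF X' Y' g(1)]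
        same_dist_forth[OF X' Y(1) g(1)] back_ext] A(2)
    by blast
  have "dc_emb X Y f g"
    using g(1) bij_betw_imp_inj_on[OF f(1)] bij_betw_imp_surj_on[OF f(1)] f(2)
    by (intro dc_emb_of_same_dist) auto
  with f(1,3) g(2) show ?thesis unfolding dc_iso_def by auto
qed

lemma ext_prop_dc_emb_extends:
  assumes X: "finite_tsu X" and Y: "ext_prop Y" and A: "substructure A X" and e: "dc_emb A Y f g"
  shows "\<exists>F G. dc_emb X Y F G \<and> (\<forall>x\<in>tpts A. F x = f x) \<and> (\<forall>t\<in>tdists A. G t = g t)"
proof -
  have X': "is_tsu X" "finite (tpts X)" "finite (tdists X)" using X unfolding finite_tsu_def by auto
  have "dist_emb A Y g" using e unfolding dc_emb_iff_dist_emb by blast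
  then obtain G where G: "dist_emb X Y G" "\<forall>t\<in>tdists A. G t = g t"
    using ext_prop_dists_emb[OF X'(1,3) Y A] by blast
  have "dc_emb A Y f G" by (rule dc_emb_cong[OF substructure_is_tsu[OF A] e]) (use G(2) in auto)
  then obtain F where "dc_emb X Y F G" "\<forall>x\<in>tpts A. F x = f x"
    using ext_prop_points_emb[OF X'(1,2) Y G(1) A] by blast
  with G(2) show ?thesis by (intro exI[of _ F] exI[of _ G]) simp
qed

lemma ext_prop_dc_iso_extends:
  assumes X: "ext_prop X" "countable_tsu X" and Y: "ext_prop Y" "countable_tsu Y"
    and A: "substructure A X" "finite_tsu A" and e: "dc_emb A Y f g"
  shows "\<exists>F G. dc_iso X Y F G \<and> (\<forall>x\<in>tpts A. F x = f x) \<and> (\<forall>t\<in>tdists A. G t = g t)"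
proof -
  have c: "countable (tpts X)" "countable (tdists X)" "countable (tpts Y)" "countable (tdists Y)"
    using X(2) Y(2) unfolding countable_tsu_def by auto
  have fin: "finite (tpts A)" "finite (tdists A)" using A(2) unfolding finite_tsu_def by auto
  have "dist_emb A Y g" using e unfolding dc_emb_iff_dist_emb by blast
  then obtain G where G: "dist_emb X Y G" "bij_betw G (tdists X) (tdists Y)" "\<forall>t\<in>tdists A. G t = g t"
    using ext_prop_dists_iso[OF X(1) c(2) Y(1) c(4) A(1) fin(2)] by blast
  have "dc_emb A Y f G" by (rule dc_emb_cong[OF substructure_is_tsu[OF A(1)] e]) (use G(3) in auto)
  then obtain F where "dc_iso X Y F G" "\<forall>x\<in>tpts A. F x = f x"
    using ext_prop_points_iso[OF X(1) c(1) Y(1) c(3) G(1,2) A(1) fin(1)] by blast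
  with G(3) show ?thesis by (intro exI[of _ F] exI[of _ G]) simp
qed

section \<open>Substructures and embeddings\<close>

definition induced :: "('a, 'b) tsu \<Rightarrow> 'a set \<Rightarrow> 'b set \<Rightarrow> ('a, 'b) tsu" where
  "induced Y S E = Y\<lparr>tpts := S, tdists := E\<rparr>"

lemma induced_simps [simp]:
  "tpts (induced Y S E) = S" "tdists (induced Y S E) = E" "tle (induced Y S E) = tle Y"
  "tzero (induced Y S E) = tzero Y" "tdist (induced Y S E) = tdist Y"
  unfolding induced_def by simp_all

definition tsu_closed :: "('a, 'b) tsu \<Rightarrow> 'a set \<Rightarrow> 'b set \<Rightarrow> bool" where
  "tsu_closed Y S E \<longleftrightarrow> S \<subseteq> tpts Y \<and> E \<subseteq> tdists Y \<and> tzero Y \<in> E \<and> (\<forall>x\<in>S. \<forall>y\<in>S. tdist Y x y \<in> E)"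

context
  fixes Y :: "('a, 'b) tsu" and S E
  assumes Y: "is_tsu Y" and closed: "tsu_closed Y S E"
begin

lemma induced_is_tsu: "is_tsu (induced Y S E)"
proof -
  have "S \<subseteq> tpts Y" "E \<subseteq> tdists Y" using closed unfolding tsu_closed_def by auto
  with Y closed show ?thesis
    unfolding is_tsu_def tsu_closed_def induced_simps by (meson subsetD)
qed

lemma induced_substructure: "substructure (induced Y S E) Y"
  using induced_is_tsu closed unfolding substructure_def dc_emb_def tsu_closed_def by auto

lemma induced_finite_tsu: "finite S \<Longrightarrow> finite E \<Longrightarrow> finite_tsu (induced Y S E)"
  using induced_is_tsu unfolding finite_tsu_def by simp

lemma induced_substructure_induced:
  "S \<subseteq> S' \<Longrightarrow> E \<subseteq> E' \<Longrightarrow> substructure (induced Y S E) (induced Y S' E')"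
  using induced_is_tsu unfolding substructure_def dc_emb_def by auto

end

lemma dc_emb_induced:
  "dc_emb X Y f g \<Longrightarrow> f ` tpts X \<subseteq> S \<Longrightarrow> g ` tdists X \<subseteq> E \<Longrightarrow> dc_emb X (induced Y S E) f g"
  unfolding dc_emb_def by simp

definition dist_closure :: "('a, 'b) tsu \<Rightarrow> 'a set \<Rightarrow> 'b set \<Rightarrow> 'b set" where
  "dist_closure Y S E = insert (tzero Y) (E \<union> (\<lambda>(x, y). tdist Y x y) ` (S \<times> S))"

lemma tsu_closed_dist_closure:
  "is_tsu Y \<Longrightarrow> S \<subseteq> tpts Y \<Longrightarrow> E \<subseteq> tdists Y \<Longrightarrow> tsu_closed Y S (dist_closure Y S E)"
  unfolding tsu_closed_def dist_closure_def using tsu_zero_in tsu_dist_in by fastforce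

lemma finite_dist_closure: "finite S \<Longrightarrow> finite E \<Longrightarrow> finite (dist_closure Y S E)"
  unfolding dist_closure_def by simp

lemma subset_dist_closure: "E \<subseteq> dist_closure Y S E"
  unfolding dist_closure_def by blast

lemma dc_emb_comp: "dc_emb X Y f g \<Longrightarrow> dc_emb Y Z f' g' \<Longrightarrow> dc_emb X Z (f' \<circ> f) (g' \<circ> g)"
  unfolding dc_emb_def by (auto simp: image_subset_iff intro: comp_inj_on inj_on_subset)

lemma dc_iso_imp_dc_emb: "dc_iso X Y f g \<Longrightarrow> dc_emb X Y f g"
  unfolding dc_iso_def by blast

lemma dc_iso_inv_into:
  assumes X: "is_tsu X" and iso: "dc_iso X Y f g"
  shows "dc_iso Y X (inv_into (tpts X) f) (inv_into (tdists X) g)"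
proof -
  have e: "dc_emb X Y f g" and f: "bij_betw f (tpts X) (tpts Y)" and g: "bij_betw g (tdists X) (tdists Y)"
    using iso unfolding dc_iso_def by auto
  have "dist_emb Y X (inv_into (tdists X) g)"
    using dist_emb_inv_into[OF X _ g] e unfolding dc_emb_iff_dist_emb by blast
  moreover have "tdist X (inv_into (tpts X) f y) (inv_into (tpts X) f y') =
      inv_into (tdists X) g (tdist Y y y')" if y: "y \<in> tpts Y" "y' \<in> tpts Y" for y y'
  proof -
    have "y \<in> f ` tpts X" "y' \<in> f ` tpts X" using y f by (auto simp: bij_betw_def)
    then obtain x x' where "x \<in> tpts X" "x' \<in> tpts X" "y = f x" "y' = f x'" by blast
    then show ?thesis
      using e bij_betw_inv_into_left[OF f] bij_betw_inv_into_left[OF g] tsu_dist_in[OF X]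
      unfolding dc_emb_def by simp
  qed
  ultimately show ?thesis
    using bij_betw_inv_into[OF f] bij_betw_inv_into[OF g]
    unfolding dc_iso_def dc_emb_iff_dist_emb bij_betw_def by blast
qed

lemma dc_emb_image_closed:
  assumes X: "is_tsu X" and e: "dc_emb X Y f g"
  shows "tsu_closed Y (f ` tpts X) (g ` tdists X)"
  unfolding tsu_closed_def
proof (intro conjI ballI)
  show "f ` tpts X \<subseteq> tpts Y" "g ` tdists X \<subseteq> tdists Y" using e unfolding dc_emb_def by auto
  have "g (tzero X) \<in> g ` tdists X" using tsu_zero_in[OF X] by blast
  then show "tzero Y \<in> g ` tdists X" using e unfolding dc_emb_def by simp
  fix y y' assume "y \<in> f ` tpts X" "y' \<in> f ` tpts X"
  then obtain x x' where "x \<in> tpts X" "x' \<in> tpts X" "y = f x" "y' = f x'" by blast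
  then show "tdist Y y y' \<in> g ` tdists X" using e tsu_dist_in[OF X] unfolding dc_emb_def by simp
qed

lemma dc_iso_image:
  assumes X: "is_tsu X" and e: "dc_emb X Y f g"
  shows "dc_iso X (induced Y (f ` tpts X) (g ` tdists X)) f g"
proof -
  have "dc_emb X (induced Y (f ` tpts X) (g ` tdists X)) f g" by (rule dc_emb_induced[OF e]) auto
  moreover have "inj_on f (tpts X)" "inj_on g (tdists X)"
    using e dist_emb_inj[OF X] unfolding dc_emb_iff_dist_emb by auto
  ultimately show ?thesis unfolding dc_iso_def bij_betw_def by simp
qed

definition empty_tsu :: "'b \<Rightarrow> ('a, 'b) tsu" where
  "empty_tsu z = \<lparr>tpts = {}, tdists = {z}, tle = \<lambda>_ _. True, tzero = z, tdist = \<lambda>_ _. z\<rparr>"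

lemma is_tsu_empty_tsu: "is_tsu (empty_tsu z)"
  unfolding is_tsu_def empty_tsu_def by simp

lemma finite_tsu_empty_tsu: "finite_tsu (empty_tsu z)"
  using is_tsu_empty_tsu unfolding finite_tsu_def by (simp add: empty_tsu_def)

lemma empty_tsu_dc_emb:
  assumes Y: "is_tsu Y" and g: "g z = tzero Y"
  shows "dc_emb (empty_tsu z) Y f g"
  unfolding dc_emb_def empty_tsu_def using g tsu_zero_in[OF Y] tsu_refl[OF Y tsu_zero_in[OF Y]] by simp

lemma empty_tsu_substructure:
  assumes Y: "is_tsu Y"
  shows "substructure (empty_tsu (tzero Y)) Y"
  using is_tsu_empty_tsu empty_tsu_dc_emb[OF Y, of id "tzero Y" id]
  unfolding substructure_def by (simp add: empty_tsu_def tsu_zero_in[OF Y])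

lemma ext_prop_dc_homogeneous:
  assumes X: "ext_prop X" "countable_tsu X"
  shows "dc_homogeneous X"
  unfolding dc_homogeneous_def
proof (intro allI impI)
  fix A B f g
  assume "substructure A X \<and> finite_tsu A \<and> substructure B X \<and> finite_tsu B \<and> dc_iso A B f g"
  then have A: "substructure A X" "finite_tsu A" and "dc_emb A X (id \<circ> f) (id \<circ> g)"
    using dc_emb_comp[OF dc_iso_imp_dc_emb] unfolding substructure_def by blast+
  then show "\<exists>F G. dc_iso X X F G \<and> (\<forall>x\<in>tpts A. F x = f x) \<and> (\<forall>t\<in>tdists A. G t = g t)"
    using ext_prop_dc_iso_extends[OF X X A] by simp
qed

lemma ext_prop_iso_homogeneous:
  assumes X: "ext_prop X" "countable (tpts X)"
  shows "iso_homogeneous X"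
  unfolding iso_homogeneous_def
proof (intro allI impI)
  fix A B f
  assume "substructure A X \<and> finite_tsu A \<and> substructure B X \<and> finite_tsu B \<and> isometry A B f"
  then have A: "substructure A X" "finite (tpts A)" and "dc_emb A X (id \<circ> f) (id \<circ> id)"
    using dc_emb_comp[OF dc_iso_imp_dc_emb] unfolding substructure_def isometry_def finite_tsu_def
    by blast+
  moreover have "dist_emb X X id"
    using tsu_zero_in[OF ext_prop_is_tsu[OF X(1)]] unfolding dist_emb_def by simp
  ultimately obtain F where "dc_iso X X F id" "\<forall>x\<in>tpts A. F x = f x"
    using ext_prop_points_iso[OF X X _ bij_betw_id A] by auto
  then show "\<exists>F. isometry X X F \<and> (\<forall>x\<in>tpts A. F x = f x)"
    unfolding isometry_def by blast
qed

lemma ext_prop_dc_isomorphic: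
  fixes X :: "('a, 'b) tsu" and Y :: "('c, 'd) tsu"
  assumes X: "ext_prop X" "countable_tsu X" and Y: "ext_prop Y" "countable_tsu Y"
  shows "dc_isomorphic X Y"
proof -
  let ?A = "empty_tsu (tzero X) :: ('a, 'b) tsu"
  have A: "substructure ?A X" using empty_tsu_substructure ext_prop_is_tsu[OF X(1)] by blast
  have "dc_emb ?A Y (\<lambda>_. undefined) (\<lambda>_. tzero Y)"
    by (rule empty_tsu_dc_emb[OF ext_prop_is_tsu[OF Y(1)]]) simp
  then obtain F G where "dc_iso X Y F G"
    using ext_prop_dc_iso_extends[OF X Y A finite_tsu_empty_tsu] by blast
  then show ?thesis unfolding dc_isomorphic_def by blast
qed

section \<open>A concrete rational Urysohn ultrametric space\<close>

definition fin_supp :: "(rat \<Rightarrow> nat) set" where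
  "fin_supp = {f. finite {q. f q \<noteq> 0} \<and> (\<forall>q. q \<le> 0 \<longrightarrow> f q = 0)}"

definition fs_dist :: "(rat \<Rightarrow> nat) \<Rightarrow> (rat \<Rightarrow> nat) \<Rightarrow> rat" where
  "fs_dist f g = Max (insert 0 {q. f q \<noteq> g q})"

context
  fixes f g :: "rat \<Rightarrow> nat"
  assumes f: "f \<in> fin_supp" and g: "g \<in> fin_supp"
begin

lemma fin_supp_finite_diff: "finite {q. f q \<noteq> g q}"
proof -
  have "{q. f q \<noteq> g q} \<subseteq> {q. f q \<noteq> 0} \<union> {q. g q \<noteq> 0}" by auto
  then show ?thesis using f g unfolding fin_supp_def by (auto intro: finite_subset)
qed

lemma fin_supp_diff_pos: "f q \<noteq> g q \<Longrightarrow> 0 < q"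
  using f g unfolding fin_supp_def by (metis (mono_tags, lifting) mem_Collect_eq not_less)

lemma fs_dist_ge: "f q \<noteq> g q \<Longrightarrow> q \<le> fs_dist f g"
  unfolding fs_dist_def using fin_supp_finite_diff by (intro Max_ge) auto

lemma fs_dist_nonneg: "0 \<le> fs_dist f g"
  unfolding fs_dist_def using fin_supp_finite_diff by (intro Max_ge) auto

lemma fs_dist_agree: "fs_dist f g < q \<Longrightarrow> f q = g q"
  using fs_dist_ge by force

lemma fs_dist_differ: "f \<noteq> g \<Longrightarrow> f (fs_dist f g) \<noteq> g (fs_dist f g)"
proof -
  assume "f \<noteq> g"
  then obtain q where q: "f q \<noteq> g q" by blast
  have "fs_dist f g \<in> insert 0 {q. f q \<noteq> g q}"
    unfolding fs_dist_def using fin_supp_finite_diff by (intro Max_in) auto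
  moreover have "fs_dist f g \<noteq> 0" using fs_dist_ge[OF q] fin_supp_diff_pos[OF q] by auto
  ultimately show ?thesis by auto
qed

lemma fs_dist_eq_0_iff: "fs_dist f g = 0 \<longleftrightarrow> f = g"
  using fs_dist_ge fin_supp_diff_pos by (fastforce simp: fs_dist_def)

lemma fs_dist_eqI:
  assumes "f m \<noteq> g m" "\<And>q. m < q \<Longrightarrow> f q = g q"
  shows "fs_dist f g = m"
  unfolding fs_dist_def using fin_supp_finite_diff fin_supp_diff_pos[OF assms(1)] assms
  by (intro Max_eqI) (auto simp: not_less[symmetric])

end

lemma fs_dist_sym: "fs_dist f g = fs_dist g f"
  unfolding fs_dist_def by (metis (mono_tags, lifting) Collect_cong)

lemma fs_dist_ultra:
  assumes f: "f \<in> fin_supp" and g: "g \<in> fin_supp" and h: "h \<in> fin_supp"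
  shows "fs_dist f h \<le> max (fs_dist f g) (fs_dist g h)"
proof -
  have "q \<le> max (fs_dist f g) (fs_dist g h)" if "q \<in> insert 0 {q. f q \<noteq> h q}" for q
    using that fs_dist_nonneg[OF f g] fs_dist_ge[OF f g, of q] fs_dist_ge[OF g h, of q]
    by (cases "q = 0"; cases "f q = g q") (auto simp: le_max_iff_disj)
  then show ?thesis unfolding fs_dist_def[of f h] using fin_supp_finite_diff[OF f h] by simp
qed

text \<open>The new point agrees with a point x0 of least prescribed distance m above m, and takes
  at m a value different from that of every point of S.\<close>

lemma fin_supp_one_point:
  assumes fin: "finite S" and S: "S \<subseteq> fin_supp" and pos: "\<And>x. x \<in> S \<Longrightarrow> 0 < r x"
    and ultra: "\<And>x y. x \<in> S \<Longrightarrow> y \<in> S \<Longrightarrow> r x \<le> max (r y) (fs_dist x y) \<and> fs_dist x y \<le> max (r x) (r y)"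
  shows "\<exists>p\<in>fin_supp. \<forall>x\<in>S. fs_dist p x = r x"
proof (cases "S = {}")
  case True
  have "(\<lambda>q. 0) \<in> fin_supp" unfolding fin_supp_def by simp
  with True show ?thesis by blast
next
  case False
  define m where "m = Min (r ` S)"
  have "m \<in> r ` S" unfolding m_def using fin False by (intro Min_in) auto
  then obtain x0 where x0: "x0 \<in> S" "r x0 = m" by auto
  have m_le: "m \<le> r x" if "x \<in> S" for x unfolding m_def using fin that by simp
  have m_pos: "0 < m" using pos x0 by auto
  define N where "N = Suc (Max ((\<lambda>x. x m) ` S))"
  have N: "N \<noteq> x m" if "x \<in> S" for x
  proof -
    have "x m \<le> Max ((\<lambda>x. x m) ` S)" using fin that by (intro Max_ge) auto
    then show ?thesis unfolding N_def by simp
  qed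
  define p where "p q = (if m < q then x0 q else if q = m then N else 0)" for q
  have x0_fs: "x0 \<in> fin_supp" using x0 S by blast
  have "{q. p q \<noteq> 0} \<subseteq> insert m {q. x0 q \<noteq> 0}" unfolding p_def by auto
  moreover have "finite {q. x0 q \<noteq> 0}" using x0_fs unfolding fin_supp_def by blast
  ultimately have "finite {q. p q \<noteq> 0}" by (meson finite_insert finite_subset)
  moreover have "p q = 0" if "q \<le> 0" for q using that m_pos unfolding p_def by auto
  ultimately have p_fs: "p \<in> fin_supp" unfolding fin_supp_def by blast
  have "fs_dist p x = r x" if x: "x \<in> S" for x
  proof -
    have x_fs: "x \<in> fin_supp" using x S by blast
    show ?thesis
    proof (cases "m < fs_dist x0 x")
      case True
      define \<delta> where "\<delta> = fs_dist x0 x"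
      have "x0 \<noteq> x" using True m_pos fs_dist_eq_0_iff[OF x0_fs x_fs] by auto
      then have "x0 \<delta> \<noteq> x \<delta>" using fs_dist_differ[OF x0_fs x_fs] unfolding \<delta>_def by blast
      then have "fs_dist p x = \<delta>"
        using True fs_dist_agree[OF x0_fs x_fs] unfolding \<delta>_def
        by (intro fs_dist_eqI[OF p_fs x_fs]) (simp_all add: p_def)
      moreover have "\<delta> \<le> r x" "r x \<le> \<delta>"
        using ultra[OF x0(1) x] ultra[OF x x0(1)] True x0(2) fs_dist_sym[of x x0]
        unfolding \<delta>_def by (simp_all add: le_max_iff_disj)
      ultimately show ?thesis by simp
    next
      case False
      have "fs_dist p x = m"
        using False N[OF x] fs_dist_agree[OF x0_fs x_fs]
        by (intro fs_dist_eqI[OF p_fs x_fs]) (simp_all add: p_def)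
      moreover have "r x \<le> m"
        using ultra[OF x x0(1)] False x0(2) fs_dist_sym[of x x0] by (simp add: le_max_iff_disj)
      ultimately show ?thesis using m_le[OF x] by simp
    qed
  qed
  with p_fs show ?thesis by blast
qed

lemma countable_fin_supp: "countable fin_supp"
proof -
  define graph where "graph f = (\<lambda>q. (q, f q)) ` {q. f q \<noteq> 0}" for f :: "rat \<Rightarrow> nat"
  have "graph ` fin_supp \<subseteq> Collect finite" unfolding graph_def fin_supp_def by auto
  then have "countable (graph ` fin_supp)" using countable_Collect_finite countable_subset by blast
  moreover have "inj_on graph fin_supp"
  proof (rule inj_onI, rule ext)
    have graph_iff: "(q, n) \<in> graph f \<longleftrightarrow> n = f q \<and> n \<noteq> 0" for f q n unfolding graph_def by auto
    fix f g q assume "graph f = graph g"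
    then have "\<forall>n. (n = f q \<and> n \<noteq> 0) \<longleftrightarrow> (n = g q \<and> n \<noteq> 0)" by (metis graph_iff)
    then show "f q = g q" by metis
  qed
  ultimately show ?thesis by (rule countable_image_inj_on)
qed

lemma infinite_fin_supp: "infinite fin_supp"
proof -
  let ?h = "\<lambda>n::nat. (\<lambda>q::rat. if q = 1 then n else 0)"
  have "range ?h \<subseteq> fin_supp" unfolding fin_supp_def by auto
  moreover have "inj ?h" by (rule injI) (metis (full_types))
  ultimately show ?thesis using finite_imageD finite_subset infinite_UNIV_nat by metis
qed

definition fs_point :: "nat \<Rightarrow> rat \<Rightarrow> nat" where
  "fs_point = from_nat_into fin_supp"

lemma bij_fs_point: "bij_betw fs_point UNIV fin_supp"
  unfolding fs_point_def by (rule bij_betw_from_nat_into[OF countable_fin_supp infinite_fin_supp])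

definition uq_dist :: "nat \<Rightarrow> nat \<Rightarrow> rat" where
  "uq_dist m n = fs_dist (fs_point m) (fs_point n)"

lemma rat_ultrametric_uq_dist: "rat_ultrametric UNIV uq_dist"
proof -
  have fs: "fs_point n \<in> fin_supp" for n using bij_fs_point by (auto simp: bij_betw_def)
  have "inj fs_point" using bij_fs_point by (simp add: bij_betw_def)
  then show ?thesis
    unfolding rat_ultrametric_def uq_dist_def
    using fs_dist_nonneg[OF fs fs] fs_dist_eq_0_iff[OF fs fs] fs_dist_ultra[OF fs fs fs]
    by (auto simp: inj_eq intro: fs_dist_sym)
qed

lemma uq_dist_one_point:
  assumes fin: "finite S" and pos: "\<And>x. x \<in> S \<Longrightarrow> 0 < r x"
    and ultra: "\<And>x y. x \<in> S \<Longrightarrow> y \<in> S \<Longrightarrow> r x \<le> max (r y) (uq_dist x y) \<and> uq_dist x y \<le> max (r x) (r y)"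
  shows "\<exists>p. \<forall>x\<in>S. uq_dist p x = r x"
proof -
  have inj: "inj fs_point" and fs: "fs_point ` UNIV = fin_supp"
    using bij_fs_point by (auto simp: bij_betw_def)
  define r' where "r' f = r (inv fs_point f)" for f
  have r': "r' (fs_point x) = r x" for x unfolding r'_def using inj by simp
  have "\<exists>f\<in>fin_supp. \<forall>y\<in>fs_point ` S. fs_dist f y = r' y"
    by (rule fin_supp_one_point) (use fin fs pos ultra in \<open>auto simp: r' uq_dist_def\<close>)
  then obtain f where "f \<in> fin_supp" "\<forall>y\<in>fs_point ` S. fs_dist f y = r' y" by blast
  moreover obtain p where "fs_point p = f" using fs \<open>f \<in> fin_supp\<close> by (metis imageE)
  ultimately show ?thesis using r' unfolding uq_dist_def by auto
qed

lemma rat_tsu_simps [simp]: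
  "tpts (rat_tsu P d) = P" "tdists (rat_tsu P d) = {q. 0 \<le> q}" "tle (rat_tsu P d) = (\<le>)"
  "tzero (rat_tsu P d) = 0" "tdist (rat_tsu P d) = d"
  unfolding rat_tsu_def by simp_all

lemma rat_ultrametric_is_tsu: "rat_ultrametric P d \<Longrightarrow> is_tsu (rat_tsu P d)"
  unfolding rat_ultrametric_def is_tsu_def by (auto simp: le_max_iff_disj)

lemma rat_ultrametric_subset: "rat_ultrametric P d \<Longrightarrow> S \<subseteq> P \<Longrightarrow> rat_ultrametric S d"
  unfolding rat_ultrametric_def by blast

lemma rat_ultrametric_inj_image:
  "rat_ultrametric B d \<Longrightarrow> inj_on h A \<Longrightarrow> h ` A \<subseteq> B \<Longrightarrow> rat_ultrametric A (\<lambda>x y. d (h x) (h y))"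
  unfolding rat_ultrametric_def inj_on_def by (simp add: image_subset_iff) blast

lemma rat_tsu_substructure:
  assumes "rat_ultrametric P d" "S \<subseteq> P"
  shows "substructure (rat_tsu S d) (rat_tsu P d)"
  using assms rat_ultrametric_is_tsu[OF rat_ultrametric_subset[OF assms]]
  unfolding substructure_def dc_emb_def by auto

lemma dist_emb_rat_tsu_id: "dist_emb (rat_tsu A dA) (rat_tsu P d) id"
  unfolding dist_emb_def by simp

lemma ultra_triangle_rat_tsu:
  "ultra_triangle (rat_tsu P d) a b c \<longleftrightarrow> a \<le> max b c \<and> b \<le> max a c \<and> c \<le> max a b"
  unfolding ultra_triangle_def by (auto simp: le_max_iff_disj)

lemma ext_prop_rat_tsu:
  assumes ru: "rat_ultrametric P d"
    and one_point: "\<And>S r. finite S \<Longrightarrow> S \<subseteq> P \<Longrightarrow> (\<And>x. x \<in> S \<Longrightarrow> 0 < r x) \<Longrightarrow>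
      (\<And>x y. x \<in> S \<Longrightarrow> y \<in> S \<Longrightarrow> r x \<le> max (r y) (d x y) \<and> d x y \<le> max (r x) (r y)) \<Longrightarrow>
      \<exists>p\<in>P. \<forall>x\<in>S. d p x = r x"
  shows "ext_prop (rat_tsu P d)"
proof (rule ext_propI)
  show "is_tsu (rat_tsu P d)" using ru by (rule rat_ultrametric_is_tsu)
next
  fix t assume "t \<in> tdists (rat_tsu P d)"
  then show "\<exists>u\<in>tdists (rat_tsu P d). tless (rat_tsu P d) t u"
    by (intro bexI[of _ "t + 1"]) (auto simp: tless_def)
next
  fix s t assume "s \<in> tdists (rat_tsu P d)" "t \<in> tdists (rat_tsu P d)" "tless (rat_tsu P d) s t"
  then show "\<exists>u\<in>tdists (rat_tsu P d). tless (rat_tsu P d) s u \<and> tless (rat_tsu P d) u t"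
    by (intro bexI[of _ "(s + t) / 2"]) (auto simp: tless_def)
next
  fix S r assume "finite S" "S \<subseteq> tpts (rat_tsu P d)"
    "\<forall>x\<in>S. r x \<in> tdists (rat_tsu P d) \<and> r x \<noteq> tzero (rat_tsu P d)"
    "\<forall>x\<in>S. \<forall>y\<in>S. ultra_triangle (rat_tsu P d) (r x) (r y) (tdist (rat_tsu P d) x y)"
  then show "\<exists>p\<in>tpts (rat_tsu P d). \<forall>x\<in>S. tdist (rat_tsu P d) p x = r x"
    using one_point[of S r] by (auto simp: ultra_triangle_rat_tsu less_le)
qed

definition uq_model :: "(nat, rat) tsu" where
  "uq_model = rat_tsu UNIV uq_dist"

lemma ext_prop_uq_model: "ext_prop uq_model"
  unfolding uq_model_def
  by (rule ext_prop_rat_tsu[OF rat_ultrametric_uq_dist]) (use uq_dist_one_point in blast)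

lemma is_UQ_uq_dist: "is_UQ UNIV uq_dist"
  unfolding is_UQ_def
proof (intro conjI allI impI)
  show "countable (UNIV :: nat set)" by simp
  show "rat_ultrametric UNIV uq_dist" by (rule rat_ultrametric_uq_dist)
next
  fix A :: "nat set" and dA assume "finite A \<and> rat_ultrametric A dA"
  then have A: "finite (tpts (rat_tsu A dA))" "is_tsu (rat_tsu A dA)"
    using rat_ultrametric_is_tsu by auto
  have "dist_emb (rat_tsu A dA) uq_model id"
    unfolding uq_model_def by (rule dist_emb_rat_tsu_id)
  moreover have "substructure (empty_tsu 0) (rat_tsu A dA)"
    using empty_tsu_substructure[OF A(2)] by simp
  moreover have "dc_emb (empty_tsu 0) uq_model id id"
    by (rule empty_tsu_dc_emb[OF ext_prop_is_tsu[OF ext_prop_uq_model]]) (simp add: uq_model_def)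
  ultimately obtain h where "dc_emb (rat_tsu A dA) uq_model h id"
    using ext_prop_points_emb[OF A(2,1) ext_prop_uq_model] by blast
  then show "\<exists>h. h ` A \<subseteq> UNIV \<and> rat_isometry_on A dA uq_dist h"
    unfolding dc_emb_def rat_isometry_on_def uq_model_def by auto
next
  fix S T :: "nat set" and h
  assume "finite S \<and> finite T \<and> S \<subseteq> UNIV \<and> T \<subseteq> UNIV \<and> bij_betw h S T \<and>
    rat_isometry_on S uq_dist uq_dist h"
  then have S: "finite S" and h: "rat_isometry_on S uq_dist uq_dist h" by auto
  have "substructure (rat_tsu S uq_dist) uq_model"
    unfolding uq_model_def by (rule rat_tsu_substructure[OF rat_ultrametric_uq_dist]) simp
  moreover have "dc_emb (rat_tsu S uq_dist) uq_model h id"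
    using h unfolding dc_emb_def rat_isometry_on_def uq_model_def by auto
  moreover have "countable (tpts uq_model)" "dist_emb uq_model uq_model id"
    unfolding uq_model_def by (simp_all add: dist_emb_rat_tsu_id)
  ultimately obtain H where "dc_iso uq_model uq_model H id" "\<forall>x\<in>S. H x = h x"
    using ext_prop_points_iso[OF ext_prop_uq_model _ ext_prop_uq_model _ _ bij_betw_id,
        of "rat_tsu S uq_dist" h] S by auto
  then show "\<exists>H. bij_betw H UNIV UNIV \<and> rat_isometry_on UNIV uq_dist uq_dist H \<and> (\<forall>x\<in>S. H x = h x)"
    unfolding dc_iso_def dc_emb_def rat_isometry_on_def uq_model_def by auto
qed

definition one_point_dist :: "('a \<Rightarrow> 'a \<Rightarrow> rat) \<Rightarrow> ('a \<Rightarrow> rat) \<Rightarrow> 'a option \<Rightarrow> 'a option \<Rightarrow> rat" where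
  "one_point_dist d r p q = (case (p, q) of
     (Some x, Some y) \<Rightarrow> d x y | (Some x, None) \<Rightarrow> r x | (None, Some y) \<Rightarrow> r y | (None, None) \<Rightarrow> 0)"

lemma rat_ultrametric_one_point_dist:
  assumes ru: "rat_ultrametric S d" and pos: "\<And>x. x \<in> S \<Longrightarrow> 0 < r x"
    and ultra: "\<And>x y. x \<in> S \<Longrightarrow> y \<in> S \<Longrightarrow> r x \<le> max (r y) (d x y) \<and> d x y \<le> max (r x) (r y)"
  shows "rat_ultrametric (insert None (Some ` S)) (one_point_dist d r)"
proof -
  have d: "0 \<le> d x y" "d x y = d y x" "d x y = 0 \<longleftrightarrow> x = y" if "x \<in> S" "y \<in> S" for x y
    using ru that unfolding rat_ultrametric_def by simp_all
  have d_ultra: "d x z \<le> max (d x y) (d y z)" if "x \<in> S" "y \<in> S" "z \<in> S" for x y z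
    using ru that unfolding rat_ultrametric_def by blast
  have r_ultra: "r x \<le> max (d x y) (r y)" "r y \<le> max (r x) (d x y)" "d x y \<le> max (r x) (r y)"
    if "x \<in> S" "y \<in> S" for x y
    using ultra[OF that] ultra[OF that(2,1)] d(2)[OF that] by (auto simp: le_max_iff_disj)
  have "0 \<le> one_point_dist d r p q \<and> one_point_dist d r p q = one_point_dist d r q p \<and>
      (one_point_dist d r p q = 0 \<longleftrightarrow> p = q)" if "p \<in> insert None (Some ` S)" "q \<in> insert None (Some ` S)" for p q
    using that d pos[THEN less_imp_le]
    by (cases p; cases q) (auto simp: one_point_dist_def dest: pos)
  moreover have "one_point_dist d r p u \<le> max (one_point_dist d r p q) (one_point_dist d r q u)"
    if "p \<in> insert None (Some ` S)" "q \<in> insert None (Some ` S)" "u \<in> insert None (Some ` S)" for p q u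
    using that d_ultra r_ultra pos[THEN less_imp_le]
    by (cases p; cases q; cases u) (auto simp: one_point_dist_def)
  ultimately show ?thesis unfolding rat_ultrametric_def by auto
qed

lemma
  assumes "is_UQ P d"
  shows is_UQ_rat_ultrametric: "rat_ultrametric P d"
    and is_UQ_universal: "finite (A :: nat set) \<Longrightarrow> rat_ultrametric A dA \<Longrightarrow>
      \<exists>h. h ` A \<subseteq> P \<and> rat_isometry_on A dA d h"
    and is_UQ_homogeneous: "finite S \<Longrightarrow> S \<subseteq> P \<Longrightarrow> h ` S \<subseteq> P \<Longrightarrow> rat_isometry_on S d d h \<Longrightarrow>
      \<exists>H. bij_betw H P P \<and> rat_isometry_on P d d H \<and> (\<forall>x\<in>S. H x = h x)"
proof -
  show "rat_ultrametric P d" using assms unfolding is_UQ_def by simp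
  show "finite A \<Longrightarrow> rat_ultrametric A dA \<Longrightarrow> \<exists>h. h ` A \<subseteq> P \<and> rat_isometry_on A dA d h"
    using assms unfolding is_UQ_def by simp
  assume "finite S" "S \<subseteq> P" "h ` S \<subseteq> P" "rat_isometry_on S d d h"
  moreover from this have "bij_betw h S (h ` S)"
    unfolding rat_isometry_on_def by (simp add: bij_betw_imageI)
  ultimately show "\<exists>H. bij_betw H P P \<and> rat_isometry_on P d d H \<and> (\<forall>x\<in>S. H x = h x)"
    using assms unfolding is_UQ_def by (meson finite_imageI)
qed

text \<open>Universality realises S together with the new point inside P, and homogeneity moves that
  copy of S back onto S.\<close>

lemma is_UQ_ext_prop:
  assumes UQ: "is_UQ P d"
  shows "ext_prop (rat_tsu P d)"
proof -
  have ru: "rat_ultrametric P d" using UQ by (rule is_UQ_rat_ultrametric)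
  show ?thesis
  proof (rule ext_prop_rat_tsu[OF ru])
    fix S r assume S: "finite S" "S \<subseteq> P" and pos: "\<And>x. x \<in> S \<Longrightarrow> 0 < r x"
      and ultra: "\<And>x y. x \<in> S \<Longrightarrow> y \<in> S \<Longrightarrow> r x \<le> max (r y) (d x y) \<and> d x y \<le> max (r x) (r y)"
    define B where "B = insert None (Some ` S)"
    define A where "A = {..<card B}"
    define k where "k = from_nat_into B"
    have k: "bij_betw k A B"
      unfolding k_def A_def by (rule bij_betw_from_nat_into_finite) (simp add: B_def S(1))
    have "rat_ultrametric B (one_point_dist d r)"
      unfolding B_def by (rule rat_ultrametric_one_point_dist[OF rat_ultrametric_subset[OF ru S(2)] pos ultra])
    moreover have "inj_on k A" "k ` A \<subseteq> B" using k by (auto simp: bij_betw_def)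
    ultimately have "rat_ultrametric A (\<lambda>i j. one_point_dist d r (k i) (k j))"
      by (rule rat_ultrametric_inj_image)
    then obtain h where h: "h ` A \<subseteq> P" "rat_isometry_on A (\<lambda>i j. one_point_dist d r (k i) (k j)) d h"
      using is_UQ_universal[OF UQ] unfolding A_def by blast
    define e where "e p = h (inv_into A k p)" for p
    have e: "e p \<in> P" "d (e p) (e q) = one_point_dist d r p q" if "p \<in> B" "q \<in> B" for p q
      using h that bij_betw_inv_into_right[OF k] bij_betw_apply[OF bij_betw_inv_into[OF k]]
      unfolding e_def rat_isometry_on_def by auto
    let ?\<psi> = "\<lambda>x. e (Some x)"
    have \<psi>: "rat_isometry_on S d d ?\<psi>"
    proof -
      have "d (?\<psi> x) (?\<psi> y) = d x y" if "x \<in> S" "y \<in> S" for x y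
        using e(2)[of "Some x" "Some y"] that by (simp add: B_def one_point_dist_def)
      moreover from this have "inj_on ?\<psi> S"
        using ru S(2) unfolding inj_on_def rat_ultrametric_def by (metis subsetD)
      ultimately show ?thesis unfolding rat_isometry_on_def by blast
    qed
    have "?\<psi> ` S \<subseteq> P" using e(1) by (auto simp: B_def)
    then obtain H where H: "bij_betw H P P" "rat_isometry_on P d d H" "\<forall>x\<in>S. H x = ?\<psi> x"
      using is_UQ_homogeneous[OF UQ S \<open>?\<psi> ` S \<subseteq> P\<close> \<psi>] by blast
    define p where "p = inv_into P H (e None)"
    have p: "p \<in> P" "H p = e None"
      using H(1) e(1)[of None None] bij_betw_inv_into_right[OF H(1)]
        bij_betw_apply[OF bij_betw_inv_into[OF H(1)]] unfolding p_def B_def by auto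
    have "d p x = r x" if "x \<in> S" for x
    proof -
      have "d p x = d (H p) (H x)" using H(2) p(1) that S(2) unfolding rat_isometry_on_def by auto
      also have "\<dots> = d (e None) (e (Some x))" using p(2) H(3) that by simp
      also have "\<dots> = r x" using e(2)[of None "Some x"] that by (simp add: B_def one_point_dist_def)
      finally show ?thesis .
    qed
    with p(1) show "\<exists>p\<in>P. \<forall>x\<in>S. d p x = r x" by blast
  qed
qed

section \<open>A model on the natural numbers\<close>

lemma dc_iso_is_tsu:
  assumes X: "is_tsu X" and iso: "dc_iso X Y f g"
  shows "is_tsu Y"
proof -
  have e: "dc_emb X Y f g" and P: "tpts Y = f ` tpts X" and D: "tdists Y = g ` tdists X"
    and f: "inj_on f (tpts X)" and g: "inj_on g (tdists X)"
    using iso unfolding dc_iso_def bij_betw_def by auto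
  have le: "s \<in> tdists X \<Longrightarrow> t \<in> tdists X \<Longrightarrow> tle Y (g s) (g t) \<longleftrightarrow> tle X s t"
    and z: "tzero Y = g (tzero X)"
    and d: "x \<in> tpts X \<Longrightarrow> y \<in> tpts X \<Longrightarrow> tdist Y (f x) (f y) = g (tdist X x y)" for s t x y
    using e unfolding dc_emb_def by auto
  show ?thesis
    unfolding is_tsu_def P D Ball_image_comp o_def z
  proof (intro conjI ballI impI)
    fix s t u assume "s \<in> tdists X" "t \<in> tdists X" "u \<in> tdists X"
    then show "tle Y (g s) (g s)" "tle Y (g s) (g t) \<or> tle Y (g t) (g s)"
      "tle Y (g (tzero X)) (g s)"
      using le tsu_refl[OF X] tsu_total[OF X] tsu_zero_le[OF X] tsu_zero_in[OF X] by simp_all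
    show "tle Y (g s) (g t) \<and> tle Y (g t) (g s) \<Longrightarrow> g s = g t"
      using le tsu_antisym[OF X] \<open>s \<in> tdists X\<close> \<open>t \<in> tdists X\<close> by metis
    show "tle Y (g s) (g t) \<and> tle Y (g t) (g u) \<Longrightarrow> tle Y (g s) (g u)"
      using le tsu_trans[OF X] \<open>s \<in> tdists X\<close> \<open>t \<in> tdists X\<close> \<open>u \<in> tdists X\<close> by metis
  next
    show "g (tzero X) \<in> g ` tdists X" using tsu_zero_in[OF X] by simp
  next
    fix x y z assume xyz: "x \<in> tpts X" "y \<in> tpts X" "z \<in> tpts X"
    show "tdist Y (f x) (f y) \<in> g ` tdists X" using d xyz tsu_dist_in[OF X] by simp
    show "tdist Y (f x) (f y) = tdist Y (f y) (f x)" using d xyz tsu_dist_sym[OF X] by simp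
    have "tdist Y (f x) (f y) = g (tzero X) \<longleftrightarrow> tdist X x y = tzero X"
      using d xyz tsu_dist_in[OF X] tsu_zero_in[OF X] inj_on_eq_iff[OF g] by simp
    then show "tdist Y (f x) (f y) = g (tzero X) \<longleftrightarrow> f x = f y"
      using xyz tsu_dist_eq_zero[OF X] inj_on_eq_iff[OF f] by simp
    have "tle X (tdist X x z) (tdist X x y) \<or> tle X (tdist X x z) (tdist X y z)"
      using tsu_ultra_triangle[OF X xyz] unfolding ultra_triangle_def by blast
    then show "tle Y (tdist Y (f x) (f z)) (tdist Y (f x) (f y)) \<or>
        tle Y (tdist Y (f x) (f z)) (tdist Y (f y) (f z))"
      using d xyz tsu_dist_in[OF X] le by simp
  qed
qed

lemma dc_iso_ext_prop:
  assumes X: "ext_prop X" and iso: "dc_iso X Y f g"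
  shows "ext_prop Y"
proof -
  have X': "is_tsu X" using X by (rule ext_prop_is_tsu)
  have e: "dc_emb X Y f g" and P: "tpts Y = f ` tpts X" and D: "tdists Y = g ` tdists X"
    and f: "inj_on f (tpts X)"
    using iso unfolding dc_iso_def bij_betw_def by auto
  have g: "dist_emb X Y g" using e unfolding dc_emb_iff_dist_emb by blast
  have d: "x \<in> tpts X \<Longrightarrow> y \<in> tpts X \<Longrightarrow> tdist Y (f x) (f y) = g (tdist X x y)" for x y
    using e unfolding dc_emb_def by auto
  show ?thesis
  proof (rule ext_propI)
    show "is_tsu Y" using X' iso by (rule dc_iso_is_tsu)
  next
    fix t assume "t \<in> tdists Y"
    then obtain s where s: "s \<in> tdists X" "t = g s" using D by blast
    then obtain u where "u \<in> tdists X" "tless X s u" using ext_prop_unbounded[OF X] by blast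
    then show "\<exists>u\<in>tdists Y. tless Y t u" using s D dist_emb_tless[OF X' g] by blast
  next
    fix t t' assume "t \<in> tdists Y" "t' \<in> tdists Y" "tless Y t t'"
    then obtain s s' where s: "s \<in> tdists X" "s' \<in> tdists X" "t = g s" "t' = g s'"
      "tless X s s'" using D dist_emb_tless[OF X' g] by auto
    then obtain u where "u \<in> tdists X" "tless X s u" "tless X u s'"
      using ext_prop_dense[OF X] by blast
    then show "\<exists>u\<in>tdists Y. tless Y t u \<and> tless Y u t'" using s D dist_emb_tless[OF X' g] by blast
  next
    fix S r assume S: "finite S" "S \<subseteq> tpts Y" and r: "\<forall>y\<in>S. r y \<in> tdists Y \<and> r y \<noteq> tzero Y"
      and ultra: "\<forall>y\<in>S. \<forall>y'\<in>S. ultra_triangle Y (r y) (r y') (tdist Y y y')"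
    let ?f = "inv_into (tpts X) f" and ?g = "inv_into (tdists X) g"
    have S': "?f ` S \<subseteq> tpts X" and f_inv: "\<And>y. y \<in> S \<Longrightarrow> f (?f y) = y"
      using S(2) P by (auto intro: inv_into_into f_inv_into_f)
    have r': "?g (r y) \<in> tdists X" "g (?g (r y)) = r y" if "y \<in> S" for y
      using r that D by (auto intro: inv_into_into f_inv_into_f)
    have "\<exists>p\<in>tpts X. \<forall>x\<in>?f ` S. tdist X p x = ?g (r (f x))"
    proof (rule ext_prop_one_point[OF X _ S'])
      show "finite (?f ` S)" using S(1) by simp
    next
      fix x assume "x \<in> ?f ` S"
      then obtain y where "y \<in> S" "x = ?f y" by blast
      then show "?g (r (f x)) \<in> tdists X \<and> ?g (r (f x)) \<noteq> tzero X"
        using r r' f_inv dist_emb_zero[OF g] by metis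
    next
      fix x x' assume "x \<in> ?f ` S" "x' \<in> ?f ` S"
      then obtain y y' where y: "y \<in> S" "y' \<in> S" "x = ?f y" "x' = ?f y'" by blast
      have x: "x \<in> tpts X" "x' \<in> tpts X" using S' y by auto
      have dy: "g (tdist X x x') = tdist Y y y'" using d[OF x] f_inv y by simp
      have "ultra_triangle Y (g (?g (r y))) (g (?g (r y'))) (g (tdist X x x'))"
        unfolding dy using ultra y r'(2) by simp
      moreover have "f x = y" "f x' = y'" using f_inv y by auto
      ultimately show "ultra_triangle X (?g (r (f x))) (?g (r (f x'))) (tdist X x x')"
        using dist_emb_ultra_triangle_iff[OF X' g] r'(1)[OF y(1)] r'(1)[OF y(2)] tsu_dist_in[OF X' x]
        by simp
    qed
    then obtain p where p: "p \<in> tpts X" "\<forall>x\<in>?f ` S. tdist X p x = ?g (r (f x))" by blast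
    have "tdist Y (f p) y = r y" if "y \<in> S" for y
      using p d[of p "?f y"] S' r'[OF that] f_inv[OF that] that by auto
    then show "\<exists>p\<in>tpts Y. \<forall>y\<in>S. tdist Y p y = r y" using p(1) P by blast
  qed
qed

text \<open>The Fraisse limit of the statement lives on (nat, nat); nat_model is uq_model with its
  rational distances coded by natural numbers.\<close>

definition rat_of_code :: "nat \<Rightarrow> rat" where
  "rat_of_code = from_nat_into {q. 0 \<le> q}"

definition code_of_rat :: "rat \<Rightarrow> nat" where
  "code_of_rat = to_nat_on {q. 0 \<le> q}"

lemma
  shows countable_nonneg_rat: "countable {q :: rat. 0 \<le> q}"
    and infinite_nonneg_rat: "infinite {q :: rat. 0 \<le> q}"
  using infinite_Ici[of "0 :: rat"] by (auto simp: atLeast_def)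

lemma bij_betw_code_of_rat: "bij_betw code_of_rat {q. 0 \<le> q} UNIV"
  unfolding code_of_rat_def by (rule to_nat_on_infinite[OF countable_nonneg_rat infinite_nonneg_rat])

lemma rat_of_code_of_rat [simp]: "0 \<le> q \<Longrightarrow> rat_of_code (code_of_rat q) = q"
  unfolding rat_of_code_def code_of_rat_def using countable_nonneg_rat by simp

definition nat_model :: "(nat, nat) tsu" where
  "nat_model = \<lparr>tpts = UNIV, tdists = UNIV, tle = \<lambda>a b. rat_of_code a \<le> rat_of_code b,
     tzero = code_of_rat 0, tdist = \<lambda>x y. code_of_rat (uq_dist x y)\<rparr>"

lemma nat_model_simps [simp]: "tpts nat_model = UNIV" "tdists nat_model = UNIV"
  unfolding nat_model_def by simp_all

lemma dc_iso_uq_model_nat_model: "dc_iso uq_model nat_model id code_of_rat"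
  using bij_betw_code_of_rat rat_ultrametric_uq_dist
  unfolding dc_iso_def dc_emb_def uq_model_def nat_model_def rat_ultrametric_def bij_betw_def
  by auto

lemma ext_prop_nat_model: "ext_prop nat_model"
  using ext_prop_uq_model dc_iso_uq_model_nat_model by (rule dc_iso_ext_prop)

lemma is_tsu_nat_model: "is_tsu nat_model"
  using ext_prop_nat_model by (rule ext_prop_is_tsu)

lemma countable_tsu_nat_model: "countable_tsu nat_model"
  unfolding countable_tsu_def using is_tsu_nat_model by (simp add: nat_model_def)

lemma nat_model_universal:
  assumes "finite_tsu A"
  shows "\<exists>f g. dc_emb A nat_model f g"
proof -
  have A: "is_tsu A" using assms unfolding finite_tsu_def by blast
  have "dc_emb (empty_tsu (tzero A)) nat_model (\<lambda>_. undefined) (\<lambda>_. tzero nat_model)"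
    by (rule empty_tsu_dc_emb[OF is_tsu_nat_model]) simp
  then show ?thesis
    using ext_prop_dc_emb_extends[OF assms ext_prop_nat_model empty_tsu_substructure[OF A]] by blast
qed

section \<open>Fraisse limits\<close>

lemma
  assumes "fraisse_limit U"
  shows fraisse_limit_countable_tsu: "countable_tsu U"
    and fraisse_limit_universal: "finite_tsu (B :: (nat, nat) tsu) \<Longrightarrow> \<exists>f g. dc_emb B U f g"
    and fraisse_limit_dc_homogeneous: "dc_homogeneous U"
  using assms unfolding fraisse_limit_def by simp_all

lemma dc_homogeneousD:
  assumes "dc_homogeneous X" "substructure A X" "finite_tsu A" "substructure B X" "finite_tsu B"
    "dc_iso A B f g"
  shows "\<exists>F G. dc_iso X X F G \<and> (\<forall>x\<in>tpts A. F x = f x) \<and> (\<forall>t\<in>tdists A. G t = g t)"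
  using assms unfolding dc_homogeneous_def by simp

lemma fraisse_limit_nat_model: "fraisse_limit nat_model"
  unfolding fraisse_limit_def
proof (intro conjI allI impI)
  define E where "E n = dist_closure nat_model {..<n} {..<n}" for n
  have closed: "tsu_closed nat_model {..<n} (E n)" for n
    unfolding E_def by (rule tsu_closed_dist_closure[OF is_tsu_nat_model]) (simp_all add: nat_model_def)
  have fin: "finite (E n)" for n unfolding E_def by (simp add: finite_dist_closure)
  have mono: "E n \<subseteq> E (Suc n)" for n unfolding E_def dist_closure_def by auto
  have E: "t \<in> E (Suc t)" for t unfolding E_def dist_closure_def by simp
  let ?C = "\<lambda>n. induced nat_model {..<n} (E n)"
  show "\<exists>C :: nat \<Rightarrow> (nat, nat) tsu. (\<forall>n. substructure (C n) nat_model \<and> finite_tsu (C n)) \<and>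
      (\<forall>n. substructure (C n) (C (Suc n))) \<and>
      tpts nat_model = (\<Union>n. tpts (C n)) \<and> tdists nat_model = (\<Union>n. tdists (C n))"
  proof (intro exI[of _ ?C] conjI allI)
    fix n
    show "substructure (?C n) nat_model" by (rule induced_substructure[OF is_tsu_nat_model closed])
    show "finite_tsu (?C n)" by (rule induced_finite_tsu[OF is_tsu_nat_model closed]) (simp_all add: fin)
    show "substructure (?C n) (?C (Suc n))"
      by (rule induced_substructure_induced[OF is_tsu_nat_model closed]) (auto simp: mono)
  next
    show "tpts nat_model = (\<Union>n. tpts (?C n))" by (auto simp: nat_model_def)
    show "tdists nat_model = (\<Union>n. tdists (?C n))" using E by (auto simp: nat_model_def)
  qed
qed (use countable_tsu_nat_model nat_model_universal
      ext_prop_dc_homogeneous[OF ext_prop_nat_model countable_tsu_nat_model] in auto)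

text \<open>Embed B into U by universality; homogeneity then moves the image of A back onto A.\<close>

lemma fraisse_limit_pullback:
  fixes U :: "('a, 'b) tsu" and B :: "(nat, nat) tsu"
  assumes U: "fraisse_limit U" and A: "substructure A U" "finite_tsu A"
    and B: "finite_tsu B" and e: "dc_emb A B f g"
  shows "\<exists>F G. dc_emb B U F G \<and> (\<forall>x\<in>tpts A. F (f x) = x) \<and> (\<forall>t\<in>tdists A. G (g t) = t)"
proof -
  have TU: "is_tsu U" using fraisse_limit_countable_tsu[OF U] unfolding countable_tsu_def by blast
  have TA: "is_tsu A" using A(2) unfolding finite_tsu_def by blast
  obtain h k where hk: "dc_emb B U h k" using fraisse_limit_universal[OF U B] by blast
  have eAU: "dc_emb A U (h \<circ> f) (k \<circ> g)" by (rule dc_emb_comp[OF e hk])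
  let ?S = "(h \<circ> f) ` tpts A" and ?E = "(k \<circ> g) ` tdists A"
  have closed: "tsu_closed U ?S ?E" by (rule dc_emb_image_closed[OF TA eAU])
  have A': "substructure (induced U ?S ?E) U" "finite_tsu (induced U ?S ?E)"
    using induced_substructure[OF TU closed] induced_finite_tsu[OF TU closed] A(2)
    unfolding finite_tsu_def by auto
  have "dc_iso (induced U ?S ?E) A (inv_into (tpts A) (h \<circ> f)) (inv_into (tdists A) (k \<circ> g))"
    by (rule dc_iso_inv_into[OF TA dc_iso_image[OF TA eAU]])
  from dc_homogeneousD[OF fraisse_limit_dc_homogeneous[OF U] A' A this]
  obtain F G where FG: "dc_iso U U F G" "\<forall>y\<in>?S. F y = inv_into (tpts A) (h \<circ> f) y"
    "\<forall>t\<in>?E. G t = inv_into (tdists A) (k \<circ> g) t"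
    by auto
  have "inj_on (h \<circ> f) (tpts A)" "inj_on (k \<circ> g) (tdists A)"
    using eAU dist_emb_inj[OF TA] unfolding dc_emb_iff_dist_emb by auto
  then have "\<forall>x\<in>tpts A. (F \<circ> h) (f x) = x" "\<forall>t\<in>tdists A. (G \<circ> k) (g t) = t"
    using FG(2,3) inv_into_f_f by fastforce+
  moreover have "dc_emb B U (F \<circ> h) (G \<circ> k)"
    by (rule dc_emb_comp[OF hk dc_iso_imp_dc_emb[OF FG(1)]])
  ultimately show ?thesis by blast
qed

lemma is_tsu_induced_nat_model: "is_tsu (induced nat_model S (dist_closure nat_model S E))"
  by (rule induced_is_tsu[OF is_tsu_nat_model tsu_closed_dist_closure[OF is_tsu_nat_model]]) simp_all

lemma fraisse_limit_realizes:
  fixes U :: "('a, 'b) tsu"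
  assumes U: "fraisse_limit U" and A: "substructure A U" "finite_tsu A"
  obtains f g where "dc_emb A nat_model f g"
    and "\<And>S E. finite S \<Longrightarrow> finite E \<Longrightarrow> f ` tpts A \<subseteq> S \<Longrightarrow> g ` tdists A \<subseteq> E \<Longrightarrow>
      \<exists>F G. dc_emb (induced nat_model S (dist_closure nat_model S E)) U F G \<and>
        (\<forall>x\<in>tpts A. F (f x) = x) \<and> (\<forall>t\<in>tdists A. G (g t) = t)"
proof -
  obtain f g where e: "dc_emb A nat_model f g" using nat_model_universal[OF A(2)] by blast
  show thesis
  proof (rule that[OF e])
    fix S E assume S: "finite S" "finite E" "f ` tpts A \<subseteq> S" "g ` tdists A \<subseteq> E"
    show "\<exists>F G. dc_emb (induced nat_model S (dist_closure nat_model S E)) U F G \<and>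
        (\<forall>x\<in>tpts A. F (f x) = x) \<and> (\<forall>t\<in>tdists A. G (g t) = t)"
    proof (rule fraisse_limit_pullback[OF U A])
      have "tsu_closed nat_model S (dist_closure nat_model S E)"
        by (rule tsu_closed_dist_closure[OF is_tsu_nat_model]) simp_all
      then show "finite_tsu (induced nat_model S (dist_closure nat_model S E))"
        by (rule induced_finite_tsu[OF is_tsu_nat_model]) (simp_all add: S finite_dist_closure)
      have "g ` tdists A \<subseteq> dist_closure nat_model S E"
        using S(4) subset_dist_closure[of E nat_model S] by (rule order_trans)
      then show "dc_emb A (induced nat_model S (dist_closure nat_model S E)) f g"
        using S(3) by (rule dc_emb_induced[OF e, rotated])
    qed
  qed
qed

text \<open>Every witness required by the extension property is found in nat_model and pulled back.\<close>

lemma fraisse_limit_ext_prop: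
  fixes U :: "('a, 'b) tsu"
  assumes U: "fraisse_limit U"
  shows "ext_prop U"
proof -
  let ?M = nat_model
  have TU: "is_tsu U" using fraisse_limit_countable_tsu[OF U] unfolding countable_tsu_def by blast
  have dists_sub: "substructure (induced U {} E) U" "finite_tsu (induced U {} E)"
    if "finite E" "tzero U \<in> E" "E \<subseteq> tdists U" for E
  proof -
    have "tsu_closed U {} E" using that unfolding tsu_closed_def by simp
    then show "substructure (induced U {} E) U" "finite_tsu (induced U {} E)"
      using induced_substructure[OF TU] induced_finite_tsu[OF TU _ _ that(1)] by simp_all
  qed
  have pull_tless: "tless U (G a) (G b) \<and> G b \<in> tdists U"
    if "dc_emb (induced ?M S (dist_closure ?M S E)) U F G" "a \<in> E" "b \<in> E" "tless ?M a b"
    for S E F G a b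
  proof -
    have ab: "a \<in> tdists (induced ?M S (dist_closure ?M S E))"
      "b \<in> tdists (induced ?M S (dist_closure ?M S E))"
      using that(2,3) subset_dist_closure[of E ?M S] by auto
    have "tless (induced ?M S (dist_closure ?M S E)) a b" using that(4) unfolding tless_def by simp
    then have "tless U (G a) (G b)" using dc_emb_tless[OF is_tsu_induced_nat_model that(1) ab] by blast
    moreover have "G b \<in> tdists U" using that(1) ab(2) unfolding dc_emb_def by auto
    ultimately show ?thesis ..
  qed
  show ?thesis
  proof (rule ext_propI)
    show "is_tsu U" by (rule TU)
  next
    fix t assume t: "t \<in> tdists U"
    let ?A = "induced U {} {tzero U, t}"
    have A: "substructure ?A U" "finite_tsu ?A" using dists_sub t tsu_zero_in[OF TU] by auto
    obtain f g where e: "dc_emb ?A ?M f g"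
      and pull: "\<And>S E. finite S \<Longrightarrow> finite E \<Longrightarrow> f ` tpts ?A \<subseteq> S \<Longrightarrow> g ` tdists ?A \<subseteq> E \<Longrightarrow>
        \<exists>F G. dc_emb (induced ?M S (dist_closure ?M S E)) U F G \<and>
          (\<forall>x\<in>tpts ?A. F (f x) = x) \<and> (\<forall>s\<in>tdists ?A. G (g s) = s)"
      by (rule fraisse_limit_realizes[OF U A]) (rule that)
    let ?E = "{tzero U, t}"
    obtain u where u: "tless ?M (g t) u" using ext_prop_unbounded[OF ext_prop_nat_model] by auto
    obtain F G where FG: "dc_emb (induced ?M {} (dist_closure ?M {} (insert u (g ` ?E)))) U F G"
      "\<forall>s\<in>?E. G (g s) = s"
      using pull[of "{}" "insert u (g ` ?E)"] by auto
    show "\<exists>u\<in>tdists U. tless U t u"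
      using pull_tless[OF FG(1) _ _ u] FG(2) by auto
  next
    fix s t assume st: "s \<in> tdists U" "t \<in> tdists U" "tless U s t"
    let ?A = "induced U {} {tzero U, s, t}"
    have A: "substructure ?A U" "finite_tsu ?A" using dists_sub st tsu_zero_in[OF TU] by auto
    obtain f g where e: "dc_emb ?A ?M f g"
      and pull: "\<And>S E. finite S \<Longrightarrow> finite E \<Longrightarrow> f ` tpts ?A \<subseteq> S \<Longrightarrow> g ` tdists ?A \<subseteq> E \<Longrightarrow>
        \<exists>F G. dc_emb (induced ?M S (dist_closure ?M S E)) U F G \<and>
          (\<forall>x\<in>tpts ?A. F (f x) = x) \<and> (\<forall>r\<in>tdists ?A. G (g r) = r)"
      by (rule fraisse_limit_realizes[OF U A]) (rule that)
    let ?E = "{tzero U, s, t}"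
    have TA: "is_tsu ?A" using A(1) by (rule substructure_is_tsu)
    have "tless ?M (g s) (g t)"
      using dc_emb_tless[OF TA e] st(3) unfolding tless_def by auto
    then obtain u where u: "tless ?M (g s) u" "tless ?M u (g t)"
      using ext_prop_dense[OF ext_prop_nat_model] by auto
    obtain F G where FG: "dc_emb (induced ?M {} (dist_closure ?M {} (insert u (g ` ?E)))) U F G"
      "\<forall>r\<in>?E. G (g r) = r"
      using pull[of "{}" "insert u (g ` ?E)"] by auto
    show "\<exists>u\<in>tdists U. tless U s u \<and> tless U u t"
      using pull_tless[OF FG(1) _ _ u(1)] pull_tless[OF FG(1) _ _ u(2)] FG(2) by auto
  next
    fix S r assume S: "finite S" "S \<subseteq> tpts U"
      and r: "\<forall>x\<in>S. r x \<in> tdists U \<and> r x \<noteq> tzero U"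
      and ultra: "\<forall>x\<in>S. \<forall>y\<in>S. ultra_triangle U (r x) (r y) (tdist U x y)"
    let ?E = "dist_closure U S (r ` S)"
    have closed: "tsu_closed U S ?E" using S(2) r by (intro tsu_closed_dist_closure[OF TU]) auto
    let ?A = "induced U S ?E"
    have A: "substructure ?A U" "finite_tsu ?A" "is_tsu ?A"
      using induced_substructure[OF TU closed] induced_finite_tsu[OF TU closed]
        induced_is_tsu[OF TU closed] S(1) finite_dist_closure[OF S(1) finite_imageI[OF S(1)]]
      by auto
    obtain f g where e: "dc_emb ?A ?M f g"
      and pull: "\<And>S' E'. finite S' \<Longrightarrow> finite E' \<Longrightarrow> f ` tpts ?A \<subseteq> S' \<Longrightarrow> g ` tdists ?A \<subseteq> E' \<Longrightarrow>
        \<exists>F G. dc_emb (induced ?M S' (dist_closure ?M S' E')) U F G \<and>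
          (\<forall>x\<in>tpts ?A. F (f x) = x) \<and> (\<forall>t\<in>tdists ?A. G (g t) = t)"
      by (rule fraisse_limit_realizes[OF U A(1,2)]) (rule that)
    have rE: "r x \<in> ?E" if "x \<in> S" for x using that unfolding dist_closure_def by blast
    have dE: "tdist U x y \<in> ?E" if "x \<in> S" "y \<in> S" for x y
      using closed that unfolding tsu_closed_def by blast
    have g: "dist_emb ?A ?M g" and f: "inj_on f S"
      and fd: "\<And>x y. x \<in> S \<Longrightarrow> y \<in> S \<Longrightarrow> tdist ?M (f x) (f y) = g (tdist U x y)"
      using e unfolding dc_emb_iff_dist_emb by auto
    have "\<exists>p\<in>tpts ?M. \<forall>z\<in>f ` S. tdist ?M p z = g (r (inv_into S f z))"
    proof (rule ext_prop_one_point[OF ext_prop_nat_model])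
      show "finite (f ` S)" "f ` S \<subseteq> tpts ?M" using S(1) by auto
    next
      fix z assume "z \<in> f ` S"
      then obtain x where x: "x \<in> S" "z = f x" by blast
      have "g (r x) \<noteq> tzero ?M"
        using dist_emb_eq_zero[OF A(3) g] rE[OF x(1)] r x(1) by auto
      then show "g (r (inv_into S f z)) \<in> tdists ?M \<and> g (r (inv_into S f z)) \<noteq> tzero ?M"
        using x f by simp
    next
      fix z z' assume "z \<in> f ` S" "z' \<in> f ` S"
      then obtain x x' where x: "x \<in> S" "x' \<in> S" "z = f x" "z' = f x'" by blast
      have "ultra_triangle ?A (r x) (r x') (tdist U x x')"
        using ultra x unfolding ultra_triangle_def by simp
      then have "ultra_triangle ?M (g (r x)) (g (r x')) (g (tdist U x x'))"
        using dist_emb_ultra_triangle_iff[OF A(3) g] rE x dE by simp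
      then show "ultra_triangle ?M (g (r (inv_into S f z))) (g (r (inv_into S f z')))
          (tdist ?M z z')"
        using x f fd by simp
    qed
    then obtain p where p: "\<forall>x\<in>S. tdist ?M p (f x) = g (r x)" using f by auto
    have "finite (g ` ?E)"
      using finite_imageI[OF finite_dist_closure[OF S(1) finite_imageI[OF S(1), of r]], of g U] .
    then obtain F G where
      FG: "dc_emb (induced ?M (insert p (f ` S)) (dist_closure ?M (insert p (f ` S)) (g ` ?E))) U F G"
        "\<forall>x\<in>S. F (f x) = x" "\<forall>t\<in>?E. G (g t) = t"
      using pull[of "insert p (f ` S)" "g ` ?E"] S(1) by auto
    have "tdist U (F p) x = r x" if "x \<in> S" for x
    proof -
      have "tdist U (F p) x = tdist U (F p) (F (f x))" using FG(2) that by simp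
      also have "\<dots> = G (tdist ?M p (f x))" using FG(1) that unfolding dc_emb_def by simp
      also have "\<dots> = r x" using p FG(3) rE that by simp
      finally show ?thesis .
    qed
    moreover have "F p \<in> tpts U" using FG(1) unfolding dc_emb_def by simp
    ultimately show "\<exists>p\<in>tpts U. \<forall>x\<in>S. tdist U p x = r x" by blast
  qed
qed

section \<open>The class of finite two-sorted ultrametric spaces\<close>

lemma countably_many_dc_iso_types:
  "\<exists>S :: (nat, nat) tsu set. countable S \<and> (\<forall>A\<in>S. finite_tsu A) \<and>
     (\<forall>X :: ('a, 'b) tsu. finite_tsu X \<longrightarrow> (\<exists>A\<in>S. dc_isomorphic X A))"
proof (intro exI conjI allI impI)
  let ?S = "{A \<in> (\<lambda>(P, E). induced nat_model P E) ` (Collect finite \<times> Collect finite). finite_tsu A}"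
  have "countable (Collect finite \<times> Collect finite :: (nat set \<times> nat set) set)"
    by (intro countable_SIGMA countable_Collect_finite)
  then show "countable ?S" by (rule countable_subset[OF _ countable_image, rotated]) auto
  show "\<forall>A\<in>?S. finite_tsu A" by blast
  fix X :: "('a, 'b) tsu" assume X: "finite_tsu X"
  then have TX: "is_tsu X" and fin: "finite (tpts X)" "finite (tdists X)"
    unfolding finite_tsu_def by auto
  obtain f g where e: "dc_emb X nat_model f g" using nat_model_universal[OF X] by blast
  let ?B = "induced nat_model (f ` tpts X) (g ` tdists X)"
  have "finite_tsu ?B"
    by (rule induced_finite_tsu[OF is_tsu_nat_model dc_emb_image_closed[OF TX e]]) (simp_all add: fin)
  with fin have "?B \<in> ?S" by auto
  moreover have "dc_isomorphic X ?B" unfolding dc_isomorphic_def using dc_iso_image[OF TX e] by blast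
  ultimately show "\<exists>A\<in>?S. dc_isomorphic X A" by blast
qed

lemma amalgamation:
  fixes A :: "('a, 'b) tsu" and B :: "('c, 'd) tsu" and C :: "('e, 'f) tsu"
  assumes A: "finite_tsu A" and B: "finite_tsu B" and C: "finite_tsu C"
    and a1: "dc_emb A B a1 a1'" and a2: "dc_emb A C a2 a2'"
  shows "\<exists>(D :: (nat, nat) tsu) b1 b1' b2 b2'. finite_tsu D \<and> dc_emb B D b1 b1' \<and> dc_emb C D b2 b2' \<and>
    (\<forall>x\<in>tpts A. b1 (a1 x) = b2 (a2 x)) \<and> (\<forall>t\<in>tdists A. b1' (a1' t) = b2' (a2' t))"
proof -
  have TA: "is_tsu A" and TC: "is_tsu C" using A C unfolding finite_tsu_def by auto
  obtain b1 b1' where b1: "dc_emb B nat_model b1 b1'" using nat_model_universal[OF B] by blast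
  let ?A' = "induced C (a2 ` tpts A) (a2' ` tdists A)"
  have A': "substructure ?A' C"
    by (rule induced_substructure[OF TC dc_emb_image_closed[OF TA a2]])
  have "dc_iso ?A' A (inv_into (tpts A) a2) (inv_into (tdists A) a2')"
    by (rule dc_iso_inv_into[OF TA dc_iso_image[OF TA a2]])
  from dc_emb_comp[OF dc_emb_comp[OF dc_iso_imp_dc_emb[OF this] a1] b1]
  obtain b2 b2' where b2: "dc_emb C nat_model b2 b2'"
    and b2_ext: "\<forall>x\<in>a2 ` tpts A. b2 x = b1 (a1 (inv_into (tpts A) a2 x))"
      "\<forall>t\<in>a2' ` tdists A. b2' t = b1' (a1' (inv_into (tdists A) a2' t))"
    using ext_prop_dc_emb_extends[OF C ext_prop_nat_model A'] by fastforce
  have "inj_on a2 (tpts A)" "inj_on a2' (tdists A)"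
    using a2 dist_emb_inj[OF TA] unfolding dc_emb_iff_dist_emb by auto
  then have comm: "\<forall>x\<in>tpts A. b1 (a1 x) = b2 (a2 x)" "\<forall>t\<in>tdists A. b1' (a1' t) = b2' (a2' t)"
    using b2_ext by simp_all
  let ?S = "b1 ` tpts B \<union> b2 ` tpts C" and ?E = "b1' ` tdists B \<union> b2' ` tdists C"
  let ?D = "induced nat_model ?S (dist_closure nat_model ?S ?E)"
  have "finite_tsu ?D"
    using B C finite_dist_closure[of ?S ?E]
    by (intro induced_finite_tsu[OF is_tsu_nat_model tsu_closed_dist_closure[OF is_tsu_nat_model]])
      (auto simp: finite_tsu_def)
  moreover have "dc_emb B ?D b1 b1'" "dc_emb C ?D b2 b2'"
    using subset_dist_closure[of ?E nat_model ?S]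
    by (auto intro!: dc_emb_induced[OF b1] dc_emb_induced[OF b2])
  ultimately show ?thesis using comm by blast
qed

lemma joint_embedding:
  fixes B :: "('a, 'b) tsu" and C :: "('c, 'd) tsu"
  assumes B: "finite_tsu B" and C: "finite_tsu C"
  shows "\<exists>D :: (nat, nat) tsu. finite_tsu D \<and> (\<exists>f g. dc_emb B D f g) \<and> (\<exists>f g. dc_emb C D f g)"
proof -
  let ?A = "empty_tsu 0 :: (nat, nat) tsu"
  have "dc_emb ?A B (\<lambda>_. undefined) (\<lambda>_. tzero B)" "dc_emb ?A C (\<lambda>_. undefined) (\<lambda>_. tzero C)"
    using B C unfolding finite_tsu_def by (auto intro: empty_tsu_dc_emb)
  from amalgamation[OF finite_tsu_empty_tsu B C this] obtain D :: "(nat, nat) tsu" and b1 b1' b2 b2'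
    where "finite_tsu D" "dc_emb B D b1 b1'" "dc_emb C D b2 b2'" by blast
  then show ?thesis by blast
qed

lemma fraisse_limit_dc_isomorphic_UQ:
  assumes U: "fraisse_limit U" and UQ: "is_UQ P d"
  shows "dc_isomorphic U (rat_tsu P d)"
proof (rule ext_prop_dc_isomorphic[OF fraisse_limit_ext_prop[OF U] fraisse_limit_countable_tsu[OF U]])
  show "ext_prop (rat_tsu P d)" using UQ by (rule is_UQ_ext_prop)
  then show "countable_tsu (rat_tsu P d)"
    using UQ countable_nonneg_rat ext_prop_is_tsu unfolding countable_tsu_def is_UQ_def by auto
qed

lemma fraisse_limit_iso_homogeneous: "fraisse_limit U \<Longrightarrow> iso_homogeneous U"
  using ext_prop_iso_homogeneous[OF fraisse_limit_ext_prop] fraisse_limit_countable_tsu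
  unfolding countable_tsu_def by blast

theorem theorem3p11:
  shows
  \<comment> \<open>nonempty\<close>
  "(\<exists>A :: (nat, nat) tsu. finite_tsu A) \<and>
   \<comment> \<open>countably many dc-isomorphism types\<close>
   (\<exists>S :: (nat, nat) tsu set. countable S \<and> (\<forall>A\<in>S. finite_tsu A) \<and>
      (\<forall>X :: ('a, 'b) tsu. finite_tsu X \<longrightarrow> (\<exists>A\<in>S. dc_isomorphic X A))) \<and>
   \<comment> \<open>joint embedding property\<close>
   (\<forall>(B :: ('c, 'd) tsu) (C :: ('e, 'f) tsu). finite_tsu B \<and> finite_tsu C \<longrightarrow>
      (\<exists>D :: (nat, nat) tsu. finite_tsu D \<and> (\<exists>f g. dc_emb B D f g) \<and> (\<exists>f g. dc_emb C D f g))) \<and>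
   \<comment> \<open>amalgamation property\<close>
   (\<forall>(A :: ('g, 'h) tsu) (B :: ('c, 'd) tsu) (C :: ('e, 'f) tsu) a1 a1' a2 a2'.
      finite_tsu A \<and> finite_tsu B \<and> finite_tsu C \<and> dc_emb A B a1 a1' \<and> dc_emb A C a2 a2' \<longrightarrow>
      (\<exists>(D :: (nat, nat) tsu) b1 b1' b2 b2'. finite_tsu D \<and> dc_emb B D b1 b1' \<and> dc_emb C D b2 b2' \<and>
         (\<forall>x\<in>tpts A. b1 (a1 x) = b2 (a2 x)) \<and> (\<forall>t\<in>tdists A. b1' (a1' t) = b2' (a2' t)))) \<and>
   \<comment> \<open>the Fraisse limit exists, U_Q exists\<close>
   (\<exists>U :: (nat, nat) tsu. fraisse_limit U) \<and>
   (\<exists>(P :: nat set) d. is_UQ P d) \<and>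
   \<comment> \<open>every Fraisse limit is dc-isomorphic to U_Q and is dc- and iso-homogeneous\<close>
   (\<forall>U :: ('i, 'j) tsu. fraisse_limit U \<longrightarrow>
      (\<forall>(P :: 'k set) d. is_UQ P d \<longrightarrow> dc_isomorphic U (rat_tsu P d)) \<and>
      dc_homogeneous U \<and> iso_homogeneous U)"
proof (intro conjI allI impI)
  show "\<exists>A :: (nat, nat) tsu. finite_tsu A" using finite_tsu_empty_tsu[of 0] by blast
  show "\<exists>S :: (nat, nat) tsu set. countable S \<and> (\<forall>A\<in>S. finite_tsu A) \<and>
      (\<forall>X :: ('a, 'b) tsu. finite_tsu X \<longrightarrow> (\<exists>A\<in>S. dc_isomorphic X A))"
    by (rule countably_many_dc_iso_types)
  show "\<exists>U :: (nat, nat) tsu. fraisse_limit U" using fraisse_limit_nat_model by blast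
  show "\<exists>(P :: nat set) d. is_UQ P d" using is_UQ_uq_dist by blast
next
  fix B :: "('c, 'd) tsu" and C :: "('e, 'f) tsu"
  assume "finite_tsu B \<and> finite_tsu C"
  then show "\<exists>D :: (nat, nat) tsu. finite_tsu D \<and> (\<exists>f g. dc_emb B D f g) \<and> (\<exists>f g. dc_emb C D f g)"
    using joint_embedding by blast
next
  fix A :: "('g, 'h) tsu" and B :: "('c, 'd) tsu" and C :: "('e, 'f) tsu" and a1 a1' a2 a2'
  assume "finite_tsu A \<and> finite_tsu B \<and> finite_tsu C \<and> dc_emb A B a1 a1' \<and> dc_emb A C a2 a2'"
  then show "\<exists>(D :: (nat, nat) tsu) b1 b1' b2 b2'. finite_tsu D \<and> dc_emb B D b1 b1' \<and>
      dc_emb C D b2 b2' \<and> (\<forall>x\<in>tpts A. b1 (a1 x) = b2 (a2 x)) \<and> (\<forall>t\<in>tdists A. b1' (a1' t) = b2' (a2' t))"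
    using amalgamation by blast
next
  fix U :: "('i, 'j) tsu" and P :: "'k set" and d
  assume "fraisse_limit U" "is_UQ P d"
  then show "dc_isomorphic U (rat_tsu P d)" by (rule fraisse_limit_dc_isomorphic_UQ)
next
  fix U :: "('i, 'j) tsu" assume "fraisse_limit U"
  then show "dc_homogeneous U" "iso_homogeneous U"
    by (rule fraisse_limit_dc_homogeneous, rule fraisse_limit_iso_homogeneous)
qed

end
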